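(* Let $d\ge 2$, $\eta\in[0,1]$ and $\epsilon\in[0,1]$, and let $\mathcal{M}_\eta$ be the quantum erasure channel on $\mathcal{H}_X\cong\mathbb{C}^d$ (defined in the context). Call a quantum channel (CPTP map) $\Lambda:\mathcal{L}(\mathcal{H}_X)\to\mathcal{L}(\mathcal{H}_X)$ admissible if $$F\big(\mathcal{M}_\eta(\rho),\,\mathcal{M}_\eta(\Lambda(\rho))\big)\ \ge\ 1-\epsilon\quad\text{for every density operator }\rho\text{ on }\mathcal{H}_X .$$ Then: (i) If $\eta^2\ge 1-\epsilon$, the channel $\Lambda(\rho)=\mathrm{Tr}(\rho)\,|1\rangle\langle 1|$ (for a fixed unit vector $|1\rangle\in\mathcal{H}_X$) is admissible, and its vector kernel $\mathcal{K}(\Lambda)$ has dimension $d-1$, so that its compressibility $\dim\mathcal{K}(\Lambda)/(d-1)$ equals $1$ (the maximum possible value). (ii) If $\eta^2<1-\epsilon$, then every admissible channel $\Lambda$ has trivial vector kernel, $\mathcal{K}(\Lambda)=\{0\}$, i.e. compressibility $0$.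
   Context: Fidelity of density operators: $F(\rho,\sigma)=\big[\mathrm{Tr}\sqrt{\sqrt{\rho}\,\sigma\sqrt{\rho}}\big]^2$. Quantum erasure channel: let $\mathcal{H}_Y=\mathcal{H}_X\oplus\mathrm{span}\{|\alpha\rangle\}\cong\mathbb{C}^{d+1}$, where $|\alpha\rangle$ is a unit vector orthogonal to $\mathcal{H}_X$; $\mathcal{M}_\eta:\mathcal{L}(\mathcal{H}_X)\to\mathcal{L}(\mathcal{H}_Y)$, $\mathcal{M}_\eta(\rho)=(1-\eta)\rho+\eta\,\mathrm{Tr}(\rho)|\alpha\rangle\langle\alpha|$. Vector kernel of a linear map $\Lambda:\mathcal{L}(\mathcal{H}_X)\to\mathcal{L}(\mathcal{H}_X)$: $\mathcal{K}(\Lambda)=\{|\psi\rangle\in\mathcal{H}_X:\ \Lambda(\rho)|\psi\rangle=0\ \text{for all density operators }\rho\}$, a subspace of $\mathcal{H}_X$. The quantum compressibility of $\Lambda$ is $\dim\mathcal{K}(\Lambda)/(d-1)$. *)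

theory Defs
  imports "Jordan_Normal_Form.Matrix" "Jordan_Normal_Form.VS_Connect"
begin

definition mtrace :: "complex mat \<Rightarrow> complex" where
  "mtrace A = (\<Sum>i<dim_row A. A $$ (i, i))"

definition psd :: "complex mat \<Rightarrow> bool" where
  "psd A \<longleftrightarrow> A \<in> carrier_mat (dim_row A) (dim_row A) \<and>
     (\<forall>v \<in> carrier_vec (dim_row A).
        Im ((A *\<^sub>v v) \<bullet>c v) = 0 \<and> 0 \<le> Re ((A *\<^sub>v v) \<bullet>c v))"

definition density :: "nat \<Rightarrow> complex mat \<Rightarrow> bool" where
  "density d \<rho> \<longleftrightarrow> \<rho> \<in> carrier_mat d d \<and> psd \<rho> \<and> mtrace \<rho> = 1"

definition msqrt :: "complex mat \<Rightarrow> complex mat" where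
  "msqrt A = (THE B. B \<in> carrier_mat (dim_row A) (dim_row A) \<and> psd B \<and> B * B = A)"

definition fidelity :: "complex mat \<Rightarrow> complex mat \<Rightarrow> real" where
  "fidelity \<rho> \<sigma> = (Re (mtrace (msqrt (msqrt \<rho> * \<sigma> * msqrt \<rho>)))) ^ 2"

text \<open>Quantum erasure channel: H_Y = C^(d+1), H_X embedded as the first d coordinates,
  alpha = the last standard basis vector (index d).\<close>
definition erasure :: "nat \<Rightarrow> real \<Rightarrow> complex mat \<Rightarrow> complex mat" where
  "erasure d \<eta> \<rho> = mat (d + 1) (d + 1) (\<lambda>(i, j).
     if i < d \<and> j < d then complex_of_real (1 - \<eta>) * \<rho> $$ (i, j)
     else if i = d \<and> j = d then complex_of_real \<eta> * mtrace \<rho>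
     else 0)"

definition linear_map_on :: "nat \<Rightarrow> (complex mat \<Rightarrow> complex mat) \<Rightarrow> bool" where
  "linear_map_on d \<Lambda> \<longleftrightarrow>
     (\<forall>A \<in> carrier_mat d d. \<Lambda> A \<in> carrier_mat d d) \<and>
     (\<forall>A \<in> carrier_mat d d. \<forall>B \<in> carrier_mat d d. \<Lambda> (A + B) = \<Lambda> A + \<Lambda> B) \<and>
     (\<forall>c. \<forall>A \<in> carrier_mat d d. \<Lambda> (c \<cdot>\<^sub>m A) = c \<cdot>\<^sub>m \<Lambda> A)"

text \<open>id_n \<otimes> \<Lambda> acting on (n*d) x (n*d) matrices, C^n \<otimes> C^d with the C^n index outermost:
  \<Lambda> is applied to each d x d block.\<close>
definition ampl :: "nat \<Rightarrow> nat \<Rightarrow> (complex mat \<Rightarrow> complex mat) \<Rightarrow> complex mat \<Rightarrow> complex mat" where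
  "ampl n d \<Lambda> X = mat (n * d) (n * d) (\<lambda>(p, q).
     \<Lambda> (mat d d (\<lambda>(a, b). X $$ ((p div d) * d + a, (q div d) * d + b))) $$ (p mod d, q mod d))"

definition completely_positive :: "nat \<Rightarrow> (complex mat \<Rightarrow> complex mat) \<Rightarrow> bool" where
  "completely_positive d \<Lambda> \<longleftrightarrow>
     (\<forall>n \<ge> 1. \<forall>X \<in> carrier_mat (n * d) (n * d). psd X \<longrightarrow> psd (ampl n d \<Lambda> X))"

definition trace_preserving :: "nat \<Rightarrow> (complex mat \<Rightarrow> complex mat) \<Rightarrow> bool" where
  "trace_preserving d \<Lambda> \<longleftrightarrow> (\<forall>A \<in> carrier_mat d d. mtrace (\<Lambda> A) = mtrace A)"

definition channel :: "nat \<Rightarrow> (complex mat \<Rightarrow> complex mat) \<Rightarrow> bool" where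
  "channel d \<Lambda> \<longleftrightarrow> linear_map_on d \<Lambda> \<and> completely_positive d \<Lambda> \<and> trace_preserving d \<Lambda>"

definition vkernel :: "nat \<Rightarrow> (complex mat \<Rightarrow> complex mat) \<Rightarrow> complex vec set" where
  "vkernel d \<Lambda> = {\<psi> \<in> carrier_vec d. \<forall>\<rho>. density d \<rho> \<longrightarrow> \<Lambda> \<rho> *\<^sub>v \<psi> = 0\<^sub>v d}"

definition subspace_dim :: "nat \<Rightarrow> complex vec set \<Rightarrow> nat" where
  "subspace_dim d K = vectorspace.dim class_ring ((module_vec TYPE(complex) d)\<lparr>carrier := K\<rparr>)"

definition compressibility :: "nat \<Rightarrow> (complex mat \<Rightarrow> complex mat) \<Rightarrow> real" where
  "compressibility d \<Lambda> = real (subspace_dim d (vkernel d \<Lambda>)) / real (d - 1)"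

definition admissible :: "nat \<Rightarrow> real \<Rightarrow> real \<Rightarrow> (complex mat \<Rightarrow> complex mat) \<Rightarrow> bool" where
  "admissible d \<eta> \<epsilon> \<Lambda> \<longleftrightarrow> channel d \<Lambda> \<and>
     (\<forall>\<rho>. density d \<rho> \<longrightarrow> fidelity (erasure d \<eta> \<rho>) (erasure d \<eta> (\<Lambda> \<rho>)) \<ge> 1 - \<epsilon>)"

definition ketbra :: "complex vec \<Rightarrow> complex mat" where
  "ketbra v = mat (dim_vec v) (dim_vec v) (\<lambda>(i, j). v $ i * cnj (v $ j))"

end

(*
  Every erased state M(rho) contains the block eta |alpha><alpha|, and the flag alpha remains an
  eigenvector with eigenvalue eta of both square roots in the fidelity formula, so that
  F(M(rho), M(sigma)) >= eta^2 for all density operators.  Hence for eta^2 >= 1 - eps the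
  replacement channel rho |-> Tr(rho) |1><1| is admissible, and its vector kernel is the
  orthogonal complement of |1>.

  Conversely, if psi /= 0 lies in the vector kernel of a channel L, put phi = psi / |psi|.  Then
  sigma = L(|phi><phi|) annihilates phi, so M(|phi><phi|) and its square root are diagonal in the
  orthonormal pair (phi, alpha), sandwiching M(sigma) between them leaves only eta^2 |alpha><alpha|,
  and the fidelity is exactly eta^2 < 1 - eps.

  Since msqrt is defined by a definite description, the argument needs existence and uniqueness
  of positive semidefinite square roots; both follow from the spectral theorem for Hermitian
  matrices, which splits off one unit eigenvector at a time.
*)

theory Submission
  imports Defs "Jordan_Normal_Form.Schur_Decomposition" "Jordan_Normal_Form.Matrix_Kernel"
begin

lemma cscalar_prod_eq_sum:
  "v \<in> carrier_vec n \<Longrightarrow> w \<in> carrier_vec n \<Longrightarrow> v \<bullet>c w = (\<Sum>i<n. v $ i * cnj (w $ i))"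
  unfolding scalar_prod_def by (auto intro!: sum.cong)

lemma mult_mat_vec_index_sum:
  "M \<in> carrier_mat n m \<Longrightarrow> x \<in> carrier_vec m \<Longrightarrow> i < n \<Longrightarrow>
   (M *\<^sub>v x) $ i = (\<Sum>j<m. M $$ (i,j) * x $ j)"
  by (auto simp: mult_mat_vec_def scalar_prod_def intro!: sum.cong)

lemma row_scalar_prod_sum:
  "M \<in> carrier_mat n m \<Longrightarrow> x \<in> carrier_vec m \<Longrightarrow> i < n \<Longrightarrow>
   row M i \<bullet> x = (\<Sum>j<m. M $$ (i,j) * x $ j)"
  by (auto simp: scalar_prod_def intro!: sum.cong)

lemma cscalar_prod_add_left:
  "v \<in> carrier_vec n \<Longrightarrow> u \<in> carrier_vec n \<Longrightarrow> w \<in> carrier_vec n \<Longrightarrow>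
   (v + u) \<bullet>c w = v \<bullet>c w + u \<bullet>c (w :: complex vec)"
  by (simp add: cscalar_prod_eq_sum[of _ n] sum.distrib algebra_simps)

lemma cscalar_prod_smult_left:
  "v \<in> carrier_vec n \<Longrightarrow> w \<in> carrier_vec n \<Longrightarrow> (a \<cdot>\<^sub>v v) \<bullet>c w = a * (v \<bullet>c (w :: complex vec))"
  by (simp add: cscalar_prod_eq_sum[of _ n] sum_distrib_left algebra_simps)

lemma cscalar_prod_smult_right:
  "v \<in> carrier_vec n \<Longrightarrow> w \<in> carrier_vec n \<Longrightarrow> w \<bullet>c (a \<cdot>\<^sub>v v) = cnj a * (w \<bullet>c (v :: complex vec))"
  by (simp add: cscalar_prod_eq_sum[of _ n] sum_distrib_left algebra_simps)

lemma cscalar_prod_zero_left: "w \<in> carrier_vec n \<Longrightarrow> 0\<^sub>v n \<bullet>c (w :: complex vec) = 0"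
  by (simp add: cscalar_prod_eq_sum[of _ n])

lemma cscalar_prod_zero_right: "w \<in> carrier_vec n \<Longrightarrow> w \<bullet>c (0\<^sub>v n :: complex vec) = 0"
  by (simp add: cscalar_prod_eq_sum[of _ n])

lemma cscalar_prod_swap:
  "v \<in> carrier_vec n \<Longrightarrow> w \<in> carrier_vec n \<Longrightarrow> w \<bullet>c v = cnj (v \<bullet>c (w :: complex vec))"
  by (simp add: cscalar_prod_eq_sum[of _ n] mult.commute)

lemma cscalar_prod_self_nonneg:
  "v \<in> carrier_vec n \<Longrightarrow> Im (v \<bullet>c (v :: complex vec)) = 0 \<and> 0 \<le> Re (v \<bullet>c v)"
  using conjugate_square_ge_0_vec[of v] by (auto simp: less_eq_complex_def)

lemma cscalar_prod_self_Re_eq_0: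
  "v \<in> carrier_vec n \<Longrightarrow> Re (v \<bullet>c (v :: complex vec)) = 0 \<Longrightarrow> v = 0\<^sub>v n"
  using cscalar_prod_self_nonneg[of v] conjugate_square_eq_0_vec[of v n] by (auto simp: complex_eq_iff)

lemma mat_adjoint_dims[simp]:
  "dim_row (mat_adjoint M) = dim_col M" "dim_col (mat_adjoint M) = dim_row M"
  unfolding mat_adjoint_def mat_of_rows_def by simp_all

lemma mat_adjoint_carrier[simp]: "M \<in> carrier_mat n m \<Longrightarrow> mat_adjoint M \<in> carrier_mat m n"
  unfolding carrier_mat_def by simp

lemma mat_adjoint_index[simp]:
  "i < dim_col M \<Longrightarrow> j < dim_row M \<Longrightarrow> mat_adjoint M $$ (i,j) = cnj (M $$ (j,i))"
  unfolding mat_adjoint_def mat_of_rows_def by simp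

lemma mat_adjoint_adjoint[simp]: "mat_adjoint (mat_adjoint (M :: complex mat)) = M"
  by (rule eq_matI) simp_all

lemma mat_adjoint_cscalar_prod:
  fixes M :: "complex mat"
  assumes M: "M \<in> carrier_mat n m" and x: "x \<in> carrier_vec m" and y: "y \<in> carrier_vec n"
  shows "(M *\<^sub>v x) \<bullet>c y = x \<bullet>c (mat_adjoint M *\<^sub>v y)"
proof -
  have "(M *\<^sub>v x) \<bullet>c y = (\<Sum>i<n. (\<Sum>j<m. M $$ (i,j) * x $ j) * cnj (y $ i))"
    using M x y by (simp add: cscalar_prod_eq_sum[of _ n] row_scalar_prod_sum)
  also have "\<dots> = (\<Sum>i<n. \<Sum>j<m. M $$ (i,j) * x $ j * cnj (y $ i))"
    by (simp add: sum_distrib_right)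
  also have "\<dots> = (\<Sum>j<m. \<Sum>i<n. M $$ (i,j) * x $ j * cnj (y $ i))"
    by (rule sum.swap)
  also have "\<dots> = (\<Sum>j<m. x $ j * cnj (\<Sum>i<n. cnj (M $$ (i,j)) * y $ i))"
    by (simp add: sum_distrib_left mult_ac)
  also have "\<dots> = x \<bullet>c (mat_adjoint M *\<^sub>v y)"
  proof -
    have c: "mat_adjoint M *\<^sub>v y \<in> carrier_vec m"
      using mult_mat_vec_carrier[OF mat_adjoint_carrier[OF M] y] .
    show ?thesis unfolding cscalar_prod_eq_sum[OF x c] using M y
      by (auto simp: row_scalar_prod_sum[of _ m n] intro!: sum.cong)
  qed
  finally show ?thesis .
qed

lemma mat_adjoint_mult:
  fixes A B :: "complex mat"
  assumes A: "A \<in> carrier_mat n m" and B: "B \<in> carrier_mat m k"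
  shows "mat_adjoint (A * B) = mat_adjoint B * mat_adjoint A"
proof (rule eq_matI)
  fix i j assume "i < dim_row (mat_adjoint B * mat_adjoint A)" and "j < dim_col (mat_adjoint B * mat_adjoint A)"
  with A B have ij: "i < k" "j < n" by auto
  have "mat_adjoint (A * B) $$ (i,j) = cnj (\<Sum>l<m. A $$ (j,l) * B $$ (l,i))"
    using A B ij by (simp add: scalar_prod_def lessThan_atLeast0)
  also have "\<dots> = (mat_adjoint B * mat_adjoint A) $$ (i,j)"
    using A B ij by (simp add: scalar_prod_def lessThan_atLeast0 mult.commute)
  finally show "mat_adjoint (A * B) $$ (i, j) = (mat_adjoint B * mat_adjoint A) $$ (i, j)" .
qed (use A B in simp_all)

lemma hermitian_cscalar_prod:
  "mat_adjoint (C :: complex mat) = C \<Longrightarrow> C \<in> carrier_mat n n \<Longrightarrow> x \<in> carrier_vec n \<Longrightarrow> y \<in> carrier_vec n \<Longrightarrow>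
   (C *\<^sub>v x) \<bullet>c y = x \<bullet>c (C *\<^sub>v y)"
  using mat_adjoint_cscalar_prod[of C n n x y] by simp

lemma quadratic_form_sum:
  "(A :: complex mat) \<in> carrier_mat n n \<Longrightarrow> v \<in> carrier_vec n \<Longrightarrow>
   (A *\<^sub>v v) \<bullet>c v = (\<Sum>k<n. \<Sum>l<n. A $$ (k,l) * v $ l * cnj (v $ k))"
  by (simp add: cscalar_prod_eq_sum[of _ n] row_scalar_prod_sum[of _ n n] sum_distrib_right)

lemma mat_eq_by_mult_vec:
  fixes A B :: "complex mat"
  assumes A: "A \<in> carrier_mat n n" and B: "B \<in> carrier_mat n n"
    and eq: "\<And>x. x \<in> carrier_vec n \<Longrightarrow> A *\<^sub>v x = B *\<^sub>v x"
  shows "A = B"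
proof (rule eq_matI)
  fix i j assume "i < dim_row B" "j < dim_col B"
  with B have ij: "i < n" "j < n" by auto
  have "A $$ (i,j) = (A *\<^sub>v unit_vec n j) $ i" using A ij by simp
  also have "\<dots> = (B *\<^sub>v unit_vec n j) $ i" using eq[of "unit_vec n j"] by simp
  also have "\<dots> = B $$ (i,j)" using B ij by simp
  finally show "A $$ (i,j) = B $$ (i,j)" .
qed (use A B in simp_all)

lemma mult_mat_vec_assoc3:
  assumes A: "A \<in> carrier_mat n n" and B: "B \<in> carrier_mat n n" and C: "C \<in> carrier_mat n n"
    and x: "x \<in> carrier_vec n"
  shows "(A * B * C) *\<^sub>v x = A *\<^sub>v (B *\<^sub>v (C *\<^sub>v x))"
proof -
  have "(A * B * C) *\<^sub>v x = (A * B) *\<^sub>v (C *\<^sub>v x)"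
    using assoc_mult_mat_vec[OF mult_carrier_mat[OF A B] C x] .
  also have "\<dots> = A *\<^sub>v (B *\<^sub>v (C *\<^sub>v x))"
    using assoc_mult_mat_vec[OF A B, of "C *\<^sub>v x"] C x by simp
  finally show ?thesis .
qed

lemma sandwich_common_eigenvector:
  fixes S E :: "complex mat"
  assumes S: "S \<in> carrier_mat n n" and E: "E \<in> carrier_mat n n" and a: "a \<in> carrier_vec n"
    and Sa: "S *\<^sub>v a = s \<cdot>\<^sub>v a" and Ea: "E *\<^sub>v a = c \<cdot>\<^sub>v a"
  shows "(S * E * S) *\<^sub>v a = (s * c * s) \<cdot>\<^sub>v a"
  using mult_mat_vec_assoc3[OF S E S a] S E a Sa Ea
  by (simp add: mult_mat_vec[of _ n n] smult_smult_assoc mult_ac)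

lemma psdD:
  "psd A \<Longrightarrow> A \<in> carrier_mat n n \<Longrightarrow> v \<in> carrier_vec n \<Longrightarrow>
   Im ((A *\<^sub>v v) \<bullet>c v) = 0 \<and> 0 \<le> Re ((A *\<^sub>v v) \<bullet>c v)"
  unfolding psd_def by auto

lemma psdI:
  "A \<in> carrier_mat n n \<Longrightarrow>
   (\<And>v. v \<in> carrier_vec n \<Longrightarrow> Im ((A *\<^sub>v v) \<bullet>c v) = 0 \<and> 0 \<le> Re ((A *\<^sub>v v) \<bullet>c v)) \<Longrightarrow> psd A"
  unfolding psd_def by auto

lemma sum_mult_delta:
  "i < (n::nat) \<Longrightarrow> (\<Sum>l<n. f l * (if l = i then a else 0)) = f i * (a::complex)"
proof -
  assume i: "i < n"
  have "(\<Sum>l<n. f l * (if l = i then a else 0)) = (\<Sum>l<n. if l = i then f l * a else 0)"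
    by (rule sum.cong) auto
  also have "\<dots> = f i * a" using i by simp
  finally show ?thesis .
qed

lemma quadratic_form_unit_vec:
  assumes A: "(A :: complex mat) \<in> carrier_mat n n" and i: "i < n"
  shows "(A *\<^sub>v unit_vec n i) \<bullet>c unit_vec n i = A $$ (i,i)"
proof -
  have "conjugate (unit_vec n i) = (unit_vec n i :: complex vec)"
    by (rule eq_vecI) (auto simp: unit_vec_def)
  with A i show ?thesis by simp
qed

lemma quadratic_form_two_coords:
  fixes A :: "complex mat" and a b :: complex
  assumes A: "A \<in> carrier_mat n n" and ij: "i < n" "j < n" "i \<noteq> j"
  defines "v \<equiv> vec n (\<lambda>k. (if k = i then a else 0) + (if k = j then b else 0))"
  shows "(A *\<^sub>v v) \<bullet>c v
      = A $$ (i,i) * a * cnj a + A $$ (i,j) * b * cnj a + A $$ (j,i) * a * cnj b + A $$ (j,j) * b * cnj b"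
proof -
  let ?g = "\<lambda>k. (if k = i then a else 0) + (if k = j then b else 0)"
  have "(A *\<^sub>v v) \<bullet>c v = (\<Sum>k<n. \<Sum>l<n. A $$ (k,l) * ?g l * cnj (?g k))"
    unfolding v_def by (rule trans[OF quadratic_form_sum[OF A]]) (auto intro!: sum.cong)
  also have "\<dots> = (\<Sum>k<n. (A $$ (k,i) * a + A $$ (k,j) * b) * cnj (?g k))"
    by (simp add: distrib_left sum.distrib sum_mult_delta ij flip: sum_distrib_right)
  also have "\<dots> = (\<Sum>k<n. (A $$ (k,i) * a + A $$ (k,j) * b) *
                   ((if k = i then cnj a else 0) + (if k = j then cnj b else 0)))"
    by (rule sum.cong) auto
  also have "\<dots> = (A $$ (i,i) * a + A $$ (i,j) * b) * cnj a + (A $$ (j,i) * a + A $$ (j,j) * b) * cnj b"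
    by (simp only: distrib_left sum.distrib sum_mult_delta ij)
  finally show ?thesis by (simp add: algebra_simps)
qed

lemma psd_hermitian:
  assumes p: "psd A" and A: "A \<in> carrier_mat n n"
  shows "mat_adjoint A = A"
proof -
  have diag: "Im (A $$ (k,k)) = 0" if "k < n" for k
    using psdD[OF p A unit_vec_carrier, of k] quadratic_form_unit_vec[OF A that] by simp
  have herm: "A $$ (i,j) = cnj (A $$ (j,i))" if ij: "i < n" "j < n" for i j
  proof (cases "i = j")
    case True
    then show ?thesis using diag[OF ij(1)] by (simp add: complex_eq_iff)
  next
    case False
    have "Im (A $$ (i,i) + A $$ (i,j) + A $$ (j,i) + A $$ (j,j)) = 0"
      using psdD[OF p A, of "vec n (\<lambda>k. (if k = i then 1 else 0) + (if k = j then 1 else 0))"]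
        quadratic_form_two_coords[OF A ij False, of 1 1] by simp
    moreover have "Im (A $$ (i,i) + A $$ (i,j) * \<i> - A $$ (j,i) * \<i> + A $$ (j,j)) = 0"
      using psdD[OF p A, of "vec n (\<lambda>k. (if k = i then 1 else 0) + (if k = j then \<i> else 0))"]
        quadratic_form_two_coords[OF A ij False, of 1 \<i>] by simp
    ultimately show ?thesis using diag[OF ij(1)] diag[OF ij(2)] by (simp add: complex_eq_iff)
  qed
  show ?thesis
  proof (rule eq_matI)
    fix i j assume "i < dim_row A" "j < dim_col A"
    then show "mat_adjoint A $$ (i, j) = A $$ (i, j)"
      using A herm[of j i] by simp
  qed (use A in simp_all)
qed

lemma psd_diag_nonneg:
  assumes p: "psd T" and T: "T \<in> carrier_mat n n" and i: "i < n"
  shows "0 \<le> Re (T $$ (i,i))"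
  using psdD[OF p T unit_vec_carrier, of i] quadratic_form_unit_vec[OF T i] by simp

lemma psd_congruence:
  assumes E: "E \<in> carrier_mat n n" and pE: "psd E" and S: "S \<in> carrier_mat n n"
  shows "psd (mat_adjoint S * E * S)"
proof (rule psdI)
  show "mat_adjoint S * E * S \<in> carrier_mat n n"
    using mult_carrier_mat[OF mult_carrier_mat[OF mat_adjoint_carrier[OF S] E] S] .
  fix v :: "complex vec" assume v: "v \<in> carrier_vec n"
  have "(mat_adjoint S * E * S) *\<^sub>v v = mat_adjoint S *\<^sub>v (E *\<^sub>v (S *\<^sub>v v))"
    using mult_mat_vec_assoc3[OF mat_adjoint_carrier[OF S] E S v] .
  then have "((mat_adjoint S * E * S) *\<^sub>v v) \<bullet>c v = (E *\<^sub>v (S *\<^sub>v v)) \<bullet>c (S *\<^sub>v v)"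
    using mat_adjoint_cscalar_prod[OF mat_adjoint_carrier[OF S], of "E *\<^sub>v (S *\<^sub>v v)" v] E S v
    by simp
  then show "Im (((mat_adjoint S * E * S) *\<^sub>v v) \<bullet>c v) = 0 \<and> 0 \<le> Re (((mat_adjoint S * E * S) *\<^sub>v v) \<bullet>c v)"
    using psdD[OF pE E, of "S *\<^sub>v v"] S v by simp
qed

lemma psd_shift_kernel:
  fixes C :: "complex mat"
  assumes C: "C \<in> carrier_mat n n" and p: "psd C" and u: "u \<in> carrier_vec n" and l: "l > 0"
    and eq: "C *\<^sub>v u + complex_of_real l \<cdot>\<^sub>v u = 0\<^sub>v n"
  shows "u = 0\<^sub>v n"
proof -
  have "(C *\<^sub>v u + complex_of_real l \<cdot>\<^sub>v u) \<bullet>c u = 0"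
    unfolding eq using u by (simp add: cscalar_prod_zero_left[of _ n])
  then have eq0: "(C *\<^sub>v u) \<bullet>c u + complex_of_real l * (u \<bullet>c u) = 0"
    using u C by (simp add: cscalar_prod_add_left[of _ n] cscalar_prod_smult_left[of _ n])
  have "Re ((C *\<^sub>v u) \<bullet>c u) + l * Re (u \<bullet>c u) = 0"
    using arg_cong[OF eq0, of Re] by simp
  moreover have "0 \<le> Re ((C *\<^sub>v u) \<bullet>c u)" using psdD[OF p C u] by auto
  moreover have "0 \<le> l * Re (u \<bullet>c u)" using l cscalar_prod_self_nonneg[OF u] by simp
  ultimately have "l * Re (u \<bullet>c u) = 0" by linarith
  then show ?thesis using cscalar_prod_self_Re_eq_0[OF u] l by simp
qed

lemma psd_eigenvector_of_square:
  fixes C :: "complex mat"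
  assumes C: "C \<in> carrier_mat n n" and p: "psd C" and v: "v \<in> carrier_vec n"
    and ev: "(C * C) *\<^sub>v v = complex_of_real (l\<^sup>2) \<cdot>\<^sub>v v" and l: "l \<ge> 0"
  shows "C *\<^sub>v v = complex_of_real l \<cdot>\<^sub>v v"
proof -
  have CCv: "C *\<^sub>v (C *\<^sub>v v) = complex_of_real (l\<^sup>2) \<cdot>\<^sub>v v" using ev C v by simp
  have Cv: "C *\<^sub>v v \<in> carrier_vec n" using C v by simp
  show ?thesis
  proof (cases "l = 0")
    case True
    have "(C *\<^sub>v v) \<bullet>c (C *\<^sub>v v) = v \<bullet>c (C *\<^sub>v (C *\<^sub>v v))"
      using hermitian_cscalar_prod[OF psd_hermitian[OF p C] C v Cv] .
    also have "\<dots> = 0" unfolding CCv True using v by (simp add: cscalar_prod_smult_right[of _ n])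
    finally have "C *\<^sub>v v = 0\<^sub>v n" using Cv by simp
    then show ?thesis using True v by auto
  next
    case False
    define u where "u = C *\<^sub>v v - complex_of_real l \<cdot>\<^sub>v v"
    have u: "u \<in> carrier_vec n" unfolding u_def using Cv v by simp
    \<comment> \<open>\<open>(C + l) u = C\<^sup>2 v - l\<^sup>2 v = 0\<close>\<close>
    have "C *\<^sub>v u + complex_of_real l \<cdot>\<^sub>v u
        = complex_of_real (l\<^sup>2) \<cdot>\<^sub>v v - complex_of_real l \<cdot>\<^sub>v (C *\<^sub>v v) + complex_of_real l \<cdot>\<^sub>v (C *\<^sub>v v - complex_of_real l \<cdot>\<^sub>v v)"
      unfolding u_def using C v Cv
      by (simp add: mult_minus_distrib_mat_vec[of C n n] mult_mat_vec[of C n n] CCv)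
    also have "\<dots> = 0\<^sub>v n"
      using v Cv C
      by (intro eq_vecI; simp add: power2_eq_square; simp add: algebra_simps)
    finally have "u = 0\<^sub>v n"
      using False l by (intro psd_shift_kernel[OF C p u, of l]) auto
    show ?thesis
    proof (rule eq_vecI)
      fix i assume "i < dim_vec (complex_of_real l \<cdot>\<^sub>v v)"
      then have i: "i < n" using v by simp
      have "u $ i = 0" using \<open>u = 0\<^sub>v n\<close> i by simp
      then show "(C *\<^sub>v v) $ i = (complex_of_real l \<cdot>\<^sub>v v) $ i"
        unfolding u_def using i v Cv by simp
    qed (use C v in simp)
  qed
qed

section \<open>Spectral theorem for Hermitian matrices\<close>

definition orthonormal :: "nat \<Rightarrow> complex vec list \<Rightarrow> bool" where
  "orthonormal n ws \<longleftrightarrow> length ws = n \<and> set ws \<subseteq> carrier_vec n \<and>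
     (\<forall>i<n. \<forall>j<n. ws ! i \<bullet>c ws ! j = (if i = j then 1 else 0))"

definition eigenbasis :: "complex mat \<Rightarrow> nat \<Rightarrow> complex vec list \<Rightarrow> bool" where
  "eigenbasis A n us \<longleftrightarrow> orthonormal n us \<and> (\<forall>i<n. \<exists>l. A *\<^sub>v us ! i = l \<cdot>\<^sub>v us ! i)"

definition normalize_vec :: "complex vec \<Rightarrow> complex vec" where
  "normalize_vec w = complex_of_real (1 / sqrt (Re (w \<bullet>c w))) \<cdot>\<^sub>v w"

lemma normalize_vec_carrier[simp]: "w \<in> carrier_vec n \<Longrightarrow> normalize_vec w \<in> carrier_vec n"
  unfolding normalize_vec_def by simp

lemma normalize_vec_cscalar_prod:
  assumes w: "w \<in> carrier_vec n" and u: "u \<in> carrier_vec n"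
  shows "normalize_vec w \<bullet>c normalize_vec u =
    complex_of_real (1 / sqrt (Re (w \<bullet>c w)) * (1 / sqrt (Re (u \<bullet>c u)))) * (w \<bullet>c u)"
  unfolding normalize_vec_def using w u
  by (simp add: cscalar_prod_smult_left[of _ n] cscalar_prod_smult_right[of _ n])

lemma normalize_vec_norm:
  assumes w: "w \<in> carrier_vec n" and nz: "w \<noteq> 0\<^sub>v n"
  shows "normalize_vec w \<bullet>c normalize_vec w = 1"
proof -
  define r where "r = Re (w \<bullet>c w)"
  have r: "Im (w \<bullet>c w) = 0" "r \<ge> 0" using cscalar_prod_self_nonneg[OF w] unfolding r_def by auto
  then have e: "w \<bullet>c w = complex_of_real r" unfolding r_def by (simp add: complex_eq_iff)
  have "r \<noteq> 0" using e nz w by auto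
  then have "1 / sqrt r * (1 / sqrt r) * r = 1" using r(2) by simp
  then have "complex_of_real (1 / sqrt r * (1 / sqrt r)) * complex_of_real r = 1"
    by (simp flip: of_real_mult)
  then show ?thesis unfolding normalize_vec_cscalar_prod[OF w w] e r_def[symmetric] by simp
qed

lemma orthonormal_extend:
  assumes v: "v \<in> carrier_vec n" and v1: "v \<bullet>c v = 1"
  shows "\<exists>ws. orthonormal n ws \<and> ws ! 0 = v"
proof -
  interpret cof_vec_space n "TYPE(complex)" .
  have v0: "v \<noteq> 0\<^sub>v n" using v1 v by (auto simp: cscalar_prod_zero_left[of _ n])
  then have n: "n > 0" using v by (cases n) auto
  define b where "b = basis_completion v"
  from basis_completion[OF v v0, folded b_def]
  have dist_b: "distinct b" and indep: "\<not> lin_dep (set b)" and b: "set b \<subseteq> carrier_vec n"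
    and hdb: "hd b = v" and len_b: "length b = n" by auto
  from hdb len_b n obtain vs where bv: "b = v # vs" by (cases b) auto
  define ws0 where "ws0 = gram_schmidt n b"
  from gram_schmidt_result[OF b dist_b indep ws0_def]
  have orth: "corthogonal ws0" and ws0c: "set ws0 \<subseteq> carrier_vec n" and len0: "length ws0 = n"
    using len_b by auto
  have "hd ws0 = v" unfolding ws0_def bv using gram_schmidt_hd[OF v] .
  then have ws00: "ws0 ! 0 = v" using len0 n by (cases ws0) auto
  have c: "ws0 ! i \<in> carrier_vec n" if "i < n" for i using ws0c that len0 by auto
  have nz: "ws0 ! i \<noteq> 0\<^sub>v n" if "i < n" for i
    using corthogonalD[OF orth, of i i] that len0 by auto
  have "orthonormal n (map normalize_vec ws0)" unfolding orthonormal_def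
  proof (intro conjI allI impI)
    fix i j assume i: "i < n" and j: "j < n"
    show "map normalize_vec ws0 ! i \<bullet>c map normalize_vec ws0 ! j = (if i = j then 1 else 0)"
    proof (cases "i = j")
      case True
      then show ?thesis using i len0 normalize_vec_norm[OF c nz] by simp
    next
      case False
      then have "ws0 ! i \<bullet>c ws0 ! j = 0" using corthogonalD[OF orth, of i j] i j len0 by auto
      then show ?thesis using i j len0 False normalize_vec_cscalar_prod[OF c[OF i] c[OF j]] by simp
    qed
  next
    show "length (map normalize_vec ws0) = n" using len0 by simp
    show "set (map normalize_vec ws0) \<subseteq> carrier_vec n" using ws0c by auto
  qed
  moreover have "map normalize_vec ws0 ! 0 = v"
    using ws00 len0 n v1 by (simp add: normalize_vec_def)
  ultimately show ?thesis by blast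
qed

lemma orthonormal_unitary:
  assumes o: "orthonormal n ws"
  defines "W \<equiv> mat_of_cols n ws"
  shows "W \<in> carrier_mat n n" "mat_adjoint W * W = 1\<^sub>m n" "W * mat_adjoint W = 1\<^sub>m n"
proof -
  have len: "length ws = n" and wc: "set ws \<subseteq> carrier_vec n"
    and orth: "\<And>i j. i < n \<Longrightarrow> j < n \<Longrightarrow> ws ! i \<bullet>c ws ! j = (if i = j then 1 else 0)"
    using o unfolding orthonormal_def by auto
  show W: "W \<in> carrier_mat n n" unfolding W_def using mat_of_cols_carrier(1)[of n ws] len by simp
  show AW: "mat_adjoint W * W = 1\<^sub>m n"
  proof (rule eq_matI)
    fix i j assume "i < dim_row (1\<^sub>m n)" "j < dim_col (1\<^sub>m n)"
    then have i: "i < n" and j: "j < n" by auto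
    have ci: "ws ! i \<in> carrier_vec n" and cj: "ws ! j \<in> carrier_vec n" using wc len i j by auto
    have "(mat_adjoint W * W) $$ (i,j) = (\<Sum>k<n. cnj (W $$ (k,i)) * W $$ (k,j))"
      using W i j by (simp add: row_scalar_prod_sum[of _ n n])
    also have "\<dots> = (\<Sum>k<n. ws ! j $ k * cnj (ws ! i $ k))"
      unfolding W_def using i j len by (auto simp: mat_of_cols_def mult.commute intro!: sum.cong)
    also have "\<dots> = ws ! j \<bullet>c ws ! i" using cscalar_prod_eq_sum[OF cj ci] by simp
    also have "\<dots> = 1\<^sub>m n $$ (i,j)" using orth[OF j i] i j by auto
    finally show "(mat_adjoint W * W) $$ (i,j) = 1\<^sub>m n $$ (i,j)" .
  qed (use W in simp_all)
  show "W * mat_adjoint W = 1\<^sub>m n" using mat_mult_left_right_inverse[OF _ W AW] W by simp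
qed

lemma unitary_cscalar_prod:
  fixes W A :: "complex mat"
  assumes W: "W \<in> carrier_mat n n" and u: "mat_adjoint W * W = 1\<^sub>m n"
    and x: "x \<in> carrier_vec n" and y: "y \<in> carrier_vec n"
  shows "(W *\<^sub>v x) \<bullet>c (W *\<^sub>v y) = x \<bullet>c y"
proof -
  have "(W *\<^sub>v x) \<bullet>c (W *\<^sub>v y) = x \<bullet>c (mat_adjoint W *\<^sub>v (W *\<^sub>v y))"
    using mat_adjoint_cscalar_prod[OF W x] y W by simp
  also have "mat_adjoint W *\<^sub>v (W *\<^sub>v y) = (mat_adjoint W * W) *\<^sub>v y"
    using W y by (simp add: assoc_mult_mat_vec[of _ n n _ n])
  finally show ?thesis using u y by simp
qed

lemma mat_adjoint_conj_index:
  fixes W A :: "complex mat"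
  assumes W: "W \<in> carrier_mat n n" and A: "A \<in> carrier_mat n n" and ij: "i < n" "j < n"
  shows "(mat_adjoint W * A * W) $$ (i,j) = (A *\<^sub>v col W j) \<bullet>c col W i"
proof -
  have "(mat_adjoint W * A * W) $$ (i,j) = (mat_adjoint W * (A * W)) $$ (i,j)"
    using assoc_mult_mat[of "mat_adjoint W" n n A n W n] W A by simp
  also have "\<dots> = row (mat_adjoint W) i \<bullet> col (A * W) j" using W A ij by simp
  also have "col (A * W) j = A *\<^sub>v col W j" by (rule col_mult2[OF A W ij(2)])
  also have "row (mat_adjoint W) i \<bullet> (A *\<^sub>v col W j) = (A *\<^sub>v col W j) \<bullet>c col W i"
    using W A ij by (simp add: scalar_prod_def mult.commute)
  finally show ?thesis .
qed

lemma eigenbasis_unitary_conj: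
  fixes W A :: "complex mat"
  assumes W: "W \<in> carrier_mat n n" "mat_adjoint W * W = 1\<^sub>m n" "W * mat_adjoint W = 1\<^sub>m n"
    and A: "A \<in> carrier_mat n n" and ys: "eigenbasis (mat_adjoint W * A * W) n ys"
  shows "eigenbasis A n (map (\<lambda>y. W *\<^sub>v y) ys)"
proof -
  have len: "length ys = n" and ysc: "\<And>i. i < n \<Longrightarrow> ys ! i \<in> carrier_vec n"
    and orth: "\<And>i j. i < n \<Longrightarrow> j < n \<Longrightarrow> ys ! i \<bullet>c ys ! j = (if i = j then 1 else 0)"
    and ev: "\<And>i. i < n \<Longrightarrow> \<exists>l. (mat_adjoint W * A * W) *\<^sub>v ys ! i = l \<cdot>\<^sub>v ys ! i"
    using ys unfolding eigenbasis_def orthonormal_def by auto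
  have aW: "mat_adjoint W \<in> carrier_mat n n" using W by simp
  have AW: "A * W = W * (mat_adjoint W * A * W)"
  proof -
    have "A * W = (W * mat_adjoint W) * A * W" using W A by simp
    also have "\<dots> = W * (mat_adjoint W * A) * W" using assoc_mult_mat[OF W(1) aW A] by simp
    also have "\<dots> = W * (mat_adjoint W * A * W)"
      using assoc_mult_mat[OF W(1) _ W(1), of "mat_adjoint W * A"] aW A by simp
    finally show ?thesis .
  qed
  have conj: "mat_adjoint W * A * W \<in> carrier_mat n n"
    using mult_carrier_mat[OF mult_carrier_mat[OF aW A] W(1)] .
  have eig: "A *\<^sub>v (W *\<^sub>v ys ! i) = l \<cdot>\<^sub>v (W *\<^sub>v ys ! i)"
    if i: "i < n" and l: "(mat_adjoint W * A * W) *\<^sub>v ys ! i = l \<cdot>\<^sub>v ys ! i" for i l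
  proof -
    have "A *\<^sub>v (W *\<^sub>v ys ! i) = (A * W) *\<^sub>v ys ! i" using A W ysc[OF i] by simp
    also have "\<dots> = W *\<^sub>v ((mat_adjoint W * A * W) *\<^sub>v ys ! i)"
      unfolding AW by (rule assoc_mult_mat_vec[OF W(1) conj ysc[OF i]])
    also have "\<dots> = l \<cdot>\<^sub>v (W *\<^sub>v ys ! i)" unfolding l using W ysc[OF i] by (simp add: mult_mat_vec[of _ n n])
    finally show ?thesis .
  qed
  show ?thesis unfolding eigenbasis_def orthonormal_def
  proof (intro conjI allI impI)
    show "length (map (\<lambda>y. W *\<^sub>v y) ys) = n" using len by simp
    show "set (map (\<lambda>y. W *\<^sub>v y) ys) \<subseteq> carrier_vec n"
      using W(1) ysc len by (auto simp: set_conv_nth)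
    fix i j assume "i < n" "j < n"
    then show "map (\<lambda>y. W *\<^sub>v y) ys ! i \<bullet>c map (\<lambda>y. W *\<^sub>v y) ys ! j = (if i = j then 1 else 0)"
      using unitary_cscalar_prod[OF W(1,2) ysc ysc] orth len by simp
  next
    fix i assume i: "i < n"
    then show "\<exists>l. A *\<^sub>v map (\<lambda>y. W *\<^sub>v y) ys ! i = l \<cdot>\<^sub>v map (\<lambda>y. W *\<^sub>v y) ys ! i"
      using eig ev[OF i] len by auto
  qed
qed

lemma vCons_cscalar_prod:
  "x \<in> carrier_vec m \<Longrightarrow> y \<in> carrier_vec m \<Longrightarrow> vCons a x \<bullet>c vCons b y = a * cnj b + x \<bullet>c (y :: complex vec)"
  by (simp add: cscalar_prod_eq_sum[of _ "Suc m"] cscalar_prod_eq_sum[of _ m] sum.lessThan_Suc_shift)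

lemma orthonormal_vCons:
  assumes us: "orthonormal m us"
  shows "orthonormal (Suc m) (vCons 1 (0\<^sub>v m) # map (vCons 0) us)"
proof -
  let ?ys = "vCons 1 (0\<^sub>v m) # map (vCons 0) us"
  have len: "length us = m" and uc: "\<And>i. i < m \<Longrightarrow> us ! i \<in> carrier_vec m"
    and orth: "\<And>i j. i < m \<Longrightarrow> j < m \<Longrightarrow> us ! i \<bullet>c us ! j = (if i = j then 1 else 0)"
    using us unfolding orthonormal_def by auto
  have ysc: "?ys ! i \<in> carrier_vec (Suc m)" if "i < Suc m" for i
    using that uc len by (cases i) auto
  have "?ys ! i \<bullet>c ?ys ! j = (if i = j then 1 else 0)" if "i < Suc m" "j < Suc m" for i j
    using that uc len orth
    by (cases i; cases j) (auto simp: vCons_cscalar_prod[of _ m] cscalar_prod_zero_left[of _ m]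
        cscalar_prod_zero_right[of _ m])
  then show ?thesis using ysc len unfolding orthonormal_def by (auto simp: set_conv_nth)
qed

lemma mult_vCons_zero:
  fixes A :: "complex mat"
  assumes A: "A \<in> carrier_mat (Suc m) (Suc m)" and x: "x \<in> carrier_vec m"
    and row0: "\<And>j. j < Suc m \<Longrightarrow> j \<noteq> 0 \<Longrightarrow> A $$ (0,j) = 0"
  shows "A *\<^sub>v vCons 0 x = vCons 0 (mat m m (\<lambda>(i,j). A $$ (Suc i, Suc j)) *\<^sub>v x)"
proof (rule eq_vecI)
  define A' where "A' = mat m m (\<lambda>(i,j). A $$ (Suc i, Suc j))"
  have A': "A' \<in> carrier_mat m m" unfolding A'_def by simp
  fix k assume "k < dim_vec (vCons 0 (mat m m (\<lambda>(i,j). A $$ (Suc i, Suc j)) *\<^sub>v x))"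
  then have k: "k < Suc m" by simp
  have "(A *\<^sub>v vCons 0 x) $ k = (\<Sum>j<Suc m. A $$ (k,j) * vCons 0 x $ j)"
    using x by (intro mult_mat_vec_index_sum[OF A _ k]) simp
  also have "\<dots> = (\<Sum>j<m. A $$ (k, Suc j) * x $ j)"
    by (subst sum.lessThan_Suc_shift) simp
  also have "\<dots> = vCons 0 (A' *\<^sub>v x) $ k"
  proof (cases k)
    case 0
    then show ?thesis using row0 by simp
  next
    case (Suc k')
    then have "k' < m" using k by simp
    then show ?thesis using Suc mult_mat_vec_index_sum[OF A' x] by (simp add: A'_def)
  qed
  finally show "(A *\<^sub>v vCons 0 x) $ k = vCons 0 (mat m m (\<lambda>(i,j). A $$ (Suc i, Suc j)) *\<^sub>v x) $ k"
    unfolding A'_def .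
qed (use A in simp)

lemma mult_vCons_one:
  fixes A :: "complex mat"
  assumes A: "A \<in> carrier_mat (Suc m) (Suc m)"
    and col0: "\<And>i. i < Suc m \<Longrightarrow> A $$ (i,0) = (if i = 0 then e else 0)"
  shows "A *\<^sub>v vCons 1 (0\<^sub>v m) = e \<cdot>\<^sub>v vCons 1 (0\<^sub>v m)"
proof (rule eq_vecI)
  fix k assume "k < dim_vec (e \<cdot>\<^sub>v vCons 1 (0\<^sub>v m))"
  then have k: "k < Suc m" by simp
  have "(A *\<^sub>v vCons 1 (0\<^sub>v m)) $ k = (\<Sum>j<Suc m. A $$ (k,j) * vCons 1 (0\<^sub>v m) $ j)"
    by (intro mult_mat_vec_index_sum[OF A _ k]) simp
  also have "\<dots> = A $$ (k,0)"
    by (subst sum.lessThan_Suc_shift) simp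
  also have "\<dots> = (e \<cdot>\<^sub>v vCons 1 (0\<^sub>v m)) $ k" using col0[OF k] k by (cases k) auto
  finally show "(A *\<^sub>v vCons 1 (0\<^sub>v m)) $ k = (e \<cdot>\<^sub>v vCons 1 (0\<^sub>v m)) $ k" .
qed (use A in simp)

lemma eigenbasis_vCons:
  fixes A :: "complex mat"
  assumes A: "A \<in> carrier_mat (Suc m) (Suc m)"
    and col0: "\<And>i. i < Suc m \<Longrightarrow> A $$ (i,0) = (if i = 0 then e else 0)"
    and row0: "\<And>j. j < Suc m \<Longrightarrow> j \<noteq> 0 \<Longrightarrow> A $$ (0,j) = 0"
    and us: "eigenbasis (mat m m (\<lambda>(i,j). A $$ (Suc i, Suc j))) m us"
  shows "eigenbasis A (Suc m) (vCons 1 (0\<^sub>v m) # map (vCons 0) us)"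
proof -
  have len: "length us = m" and uc: "\<And>i. i < m \<Longrightarrow> us ! i \<in> carrier_vec m"
    and ev: "\<And>i. i < m \<Longrightarrow> \<exists>l. mat m m (\<lambda>(i,j). A $$ (Suc i, Suc j)) *\<^sub>v us ! i = l \<cdot>\<^sub>v us ! i"
    using us unfolding eigenbasis_def orthonormal_def by auto
  have "\<exists>l. A *\<^sub>v (vCons 1 (0\<^sub>v m) # map (vCons 0) us) ! i = l \<cdot>\<^sub>v (vCons 1 (0\<^sub>v m) # map (vCons 0) us) ! i"
    if i: "i < Suc m" for i
  proof (cases i)
    case 0
    then show ?thesis using mult_vCons_one[OF A col0] by auto
  next
    case (Suc i')
    then have i': "i' < m" using i by simp
    obtain l where l: "mat m m (\<lambda>(i,j). A $$ (Suc i, Suc j)) *\<^sub>v us ! i' = l \<cdot>\<^sub>v us ! i'"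
      using ev[OF i'] by blast
    have "A *\<^sub>v vCons 0 (us ! i') = l \<cdot>\<^sub>v vCons 0 (us ! i')"
      using mult_vCons_zero[OF A uc[OF i'] row0] l by (auto intro!: eq_vecI simp: vec_index_vCons)
    then show ?thesis using Suc i' len by auto
  qed
  then show ?thesis using orthonormal_vCons us unfolding eigenbasis_def by blast
qed

lemma exists_unit_eigenvector:
  fixes A :: "complex mat"
  assumes A: "A \<in> carrier_mat (Suc m) (Suc m)"
  shows "\<exists>v e. v \<in> carrier_vec (Suc m) \<and> v \<bullet>c v = 1 \<and> A *\<^sub>v v = e \<cdot>\<^sub>v v"
proof -
  obtain as where cp: "char_poly A = (\<Prod>a\<leftarrow>as. [:- a, 1:])" and "length as = Suc m"
    using char_poly_factorized[OF A] by blast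
  then obtain e rest where "as = e # rest" by (cases as) auto
  then have "poly (char_poly A) e = 0" unfolding cp by simp
  then have "eigenvalue A e" using eigenvalue_root_char_poly[OF A] by simp
  then obtain v where "eigenvector A v e" using find_eigenvector[OF A] by blast
  then have v: "v \<in> carrier_vec (Suc m)" and v0: "v \<noteq> 0\<^sub>v (Suc m)" and Av: "A *\<^sub>v v = e \<cdot>\<^sub>v v"
    using A unfolding eigenvector_def by auto
  have "A *\<^sub>v normalize_vec v = e \<cdot>\<^sub>v normalize_vec v" unfolding normalize_vec_def using A v Av
    by (simp add: mult_mat_vec[of _ "Suc m" "Suc m"] smult_smult_assoc mult.commute)
  then show ?thesis using v normalize_vec_norm[OF v v0] by (intro exI conjI) auto
qed

lemma hermitian_unitary_conj:
  fixes A W :: "complex mat"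
  assumes A: "A \<in> carrier_mat n n" "mat_adjoint A = A" and W: "W \<in> carrier_mat n n"
  shows "mat_adjoint (mat_adjoint W * A * W) = mat_adjoint W * A * W"
proof -
  have aW: "mat_adjoint W \<in> carrier_mat n n" using W by simp
  have "mat_adjoint (mat_adjoint W * A * W) = mat_adjoint W * mat_adjoint (mat_adjoint W * A)"
    using mat_adjoint_mult[OF mult_carrier_mat[OF aW A(1)] W] by simp
  also have "mat_adjoint (mat_adjoint W * A) = A * W"
    using mat_adjoint_mult[OF aW A(1)] A(2) by simp
  also have "mat_adjoint W * (A * W) = mat_adjoint W * A * W"
    using assoc_mult_mat[OF aW A(1) W] by simp
  finally show ?thesis .
qed

lemma unitary_conj_first_column:
  fixes A :: "complex mat"
  assumes ws: "orthonormal n ws" and A: "A \<in> carrier_mat n n" and ev: "A *\<^sub>v ws ! 0 = e \<cdot>\<^sub>v ws ! 0"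
    and i: "i < n"
  shows "(mat_adjoint (mat_of_cols n ws) * A * mat_of_cols n ws) $$ (i,0) = (if i = 0 then e else 0)"
proof -
  have wsc: "\<And>i. i < n \<Longrightarrow> ws ! i \<in> carrier_vec n" and len: "length ws = n"
    and orth: "\<And>i j. i < n \<Longrightarrow> j < n \<Longrightarrow> ws ! i \<bullet>c ws ! j = (if i = j then 1 else 0)"
    using ws unfolding orthonormal_def by auto
  have col: "col (mat_of_cols n ws) j = ws ! j" if "j < n" for j
    using that wsc[OF that] len by simp
  show ?thesis
    using mat_adjoint_conj_index[OF orthonormal_unitary(1)[OF ws] A i, of 0] col[OF i] col[of 0]
      ev orth[of 0 i] i wsc[OF i] wsc[of 0]
    by (simp add: cscalar_prod_smult_left[of _ n])
qed

lemma hermitian_eigenbasis: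
  fixes A :: "complex mat"
  assumes "A \<in> carrier_mat n n" "mat_adjoint A = A"
  shows "\<exists>us. eigenbasis A n us"
  using assms
proof (induction n arbitrary: A)
  case 0
  show ?case by (rule exI[of _ "[]"]) (auto simp: eigenbasis_def orthonormal_def)
next
  case (Suc m A)
  have A: "A \<in> carrier_mat (Suc m) (Suc m)" and hA: "mat_adjoint A = A" using Suc.prems by auto
  obtain v e where v: "v \<in> carrier_vec (Suc m)" "v \<bullet>c v = 1" and Av: "A *\<^sub>v v = e \<cdot>\<^sub>v v"
    using exists_unit_eigenvector[OF A] by blast
  obtain ws where ws: "orthonormal (Suc m) ws" and ws0: "ws ! 0 = v"
    using orthonormal_extend[OF v] by blast
  define W where "W = mat_of_cols (Suc m) ws"
  note U = orthonormal_unitary[OF ws, folded W_def]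
  \<comment> \<open>The first column of \<open>W\<close> is an eigenvector, so conjugating by \<open>W\<close> splits off a \<open>1 \<times> 1\<close> block.\<close>
  define A' where "A' = mat_adjoint W * A * W"
  have A': "A' \<in> carrier_mat (Suc m) (Suc m)"
    unfolding A'_def using mult_carrier_mat[OF mult_carrier_mat[OF mat_adjoint_carrier[OF U(1)] A] U(1)] .
  have herm: "A' $$ (i,j) = cnj (A' $$ (j,i))" if "i < Suc m" "j < Suc m" for i j
    using arg_cong[OF hermitian_unitary_conj[OF A hA U(1)], of "\<lambda>M. M $$ (i,j)"] that A U(1)
    unfolding A'_def by simp
  have col0: "A' $$ (i,0) = (if i = 0 then e else 0)" if "i < Suc m" for i
    unfolding A'_def W_def using unitary_conj_first_column[OF ws A _ that] Av ws0 by simp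
  have row0: "A' $$ (0,j) = 0" if "j < Suc m" "j \<noteq> 0" for j
    using herm[of 0 j] col0[of j] that by simp
  define A3 where "A3 = mat m m (\<lambda>(i,j). A' $$ (Suc i, Suc j))"
  have "mat_adjoint A3 = A3"
  proof (rule eq_matI)
    fix i j assume "i < dim_row A3" "j < dim_col A3"
    then show "mat_adjoint A3 $$ (i, j) = A3 $$ (i, j)"
      using herm[of "Suc i" "Suc j"] by (simp add: A3_def)
  qed (simp_all add: A3_def)
  then obtain us3 where "eigenbasis A3 m us3" using Suc.IH[of A3] unfolding A3_def by auto
  then have "eigenbasis A' (Suc m) (vCons 1 (0\<^sub>v m) # map (vCons 0) us3)"
    using eigenbasis_vCons[OF A' col0 row0] unfolding A3_def by blast
  then show ?case using eigenbasis_unitary_conj[OF U A] unfolding A'_def by blast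
qed

section \<open>Square roots of positive semidefinite matrices\<close>

lemma psd_eigenvalue_square:
  fixes A :: "complex mat"
  assumes u: "u \<in> carrier_vec n" "u \<bullet>c u = 1" and ev: "A *\<^sub>v u = l \<cdot>\<^sub>v u"
    and q: "Im ((A *\<^sub>v u) \<bullet>c u) = 0" "0 \<le> Re ((A *\<^sub>v u) \<bullet>c u)"
  shows "\<exists>r \<ge> 0. l = complex_of_real (r\<^sup>2)"
proof -
  have "(A *\<^sub>v u) \<bullet>c u = l" unfolding ev using u by (simp add: cscalar_prod_smult_left[of _ n])
  then have "Im l = 0" "0 \<le> Re l" using q by auto
  then have "l = complex_of_real ((sqrt (Re l))\<^sup>2)" by (simp add: complex_eq_iff)
  then show ?thesis using real_sqrt_ge_zero[OF \<open>0 \<le> Re l\<close>] by blast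
qed

lemma mat_eq_on_orthonormal:
  fixes B C :: "complex mat"
  assumes B: "B \<in> carrier_mat n n" and C: "C \<in> carrier_mat n n" and us: "orthonormal n us"
    and eq: "\<And>j. j < n \<Longrightarrow> B *\<^sub>v us ! j = C *\<^sub>v us ! j"
  shows "B = C"
proof -
  define U where "U = mat_of_cols n us"
  note U = orthonormal_unitary[OF us, folded U_def]
  have usc: "us ! j \<in> carrier_vec n" and len: "length us = n" if "j < n" for j
    using that us unfolding orthonormal_def by auto
  have colU: "col U j = us ! j" if "j < n" for j
    unfolding U_def using that usc[OF that] len[OF that] by simp
  have BU: "B * U = C * U"
  proof (rule eq_matI)
    fix i j assume "i < dim_row (C * U)" "j < dim_col (C * U)"
    then have ij: "i < n" "j < n" using C U by auto
    show "(B * U) $$ (i,j) = (C * U) $$ (i,j)"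
      using arg_cong[OF eq[OF ij(2)], of "\<lambda>v. v $ i"] B C U(1) ij colU[OF ij(2)] by simp
  qed (use B C U in simp_all)
  have "B = (B * U) * mat_adjoint U"
    using U B assoc_mult_mat[OF B U(1), of "mat_adjoint U" n] by simp
  also have "\<dots> = C" unfolding BU
    using U C assoc_mult_mat[OF C U(1), of "mat_adjoint U" n] by simp
  finally show ?thesis .
qed

lemma psd_sqrt_unique:
  fixes B C :: "complex mat"
  assumes B: "B \<in> carrier_mat n n" and C: "C \<in> carrier_mat n n" and pB: "psd B" and pC: "psd C"
    and eq: "B * B = C * C"
  shows "B = C"
proof -
  have BB: "B * B \<in> carrier_mat n n" using B by simp
  have hB: "mat_adjoint B = B" using psd_hermitian[OF pB B] .
  have "mat_adjoint (B * B) = B * B" using mat_adjoint_mult[OF B B] hB by simp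
  then obtain us where us: "eigenbasis (B * B) n us" using hermitian_eigenbasis[OF BB] by blast
  then have usc: "\<And>i. i < n \<Longrightarrow> us ! i \<in> carrier_vec n"
    and norm: "\<And>i. i < n \<Longrightarrow> us ! i \<bullet>c us ! i = 1"
    and ev: "\<And>i. i < n \<Longrightarrow> \<exists>l. (B * B) *\<^sub>v us ! i = l \<cdot>\<^sub>v us ! i"
    unfolding eigenbasis_def orthonormal_def by auto
  \<comment> \<open>Both square roots act on an eigenvector of \<open>B\<^sup>2\<close> as the nonnegative root of its eigenvalue.\<close>
  have "B *\<^sub>v us ! j = C *\<^sub>v us ! j" if j: "j < n" for j
  proof -
    obtain l where l: "(B * B) *\<^sub>v us ! j = l \<cdot>\<^sub>v us ! j" using ev[OF j] by blast
    have uj: "us ! j \<in> carrier_vec n" using usc[OF j] .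
    have Bu: "B *\<^sub>v us ! j \<in> carrier_vec n" using B uj by simp
    have "((B * B) *\<^sub>v us ! j) \<bullet>c us ! j = (B *\<^sub>v us ! j) \<bullet>c (B *\<^sub>v us ! j)"
      using hermitian_cscalar_prod[OF hB B Bu uj] B uj by simp
    then have "Im (((B * B) *\<^sub>v us ! j) \<bullet>c us ! j) = 0" "0 \<le> Re (((B * B) *\<^sub>v us ! j) \<bullet>c us ! j)"
      using cscalar_prod_self_nonneg[OF Bu] by auto
    then obtain r where r: "r \<ge> 0" "l = complex_of_real (r\<^sup>2)"
      using psd_eigenvalue_square[OF uj norm[OF j] l] by blast
    have "(B * B) *\<^sub>v us ! j = complex_of_real (r\<^sup>2) \<cdot>\<^sub>v us ! j" "(C * C) *\<^sub>v us ! j = complex_of_real (r\<^sup>2) \<cdot>\<^sub>v us ! j"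
      using l r eq by simp_all
    then show ?thesis
      using psd_eigenvector_of_square[OF B pB uj _ r(1)] psd_eigenvector_of_square[OF C pC uj _ r(1)] by simp
  qed
  then show ?thesis using mat_eq_on_orthonormal[OF B C] us unfolding eigenbasis_def by blast
qed

lemma mat_diag_nonneg_psd:
  assumes r: "\<And>i. i < n \<Longrightarrow> r i \<ge> 0"
  shows "psd (mat_diag n (\<lambda>i. complex_of_real (r i)))"
proof (rule psdI[OF mat_diag_dim])
  fix w :: "complex vec" assume w: "w \<in> carrier_vec n"
  have "mat_diag n (\<lambda>i. complex_of_real (r i)) *\<^sub>v w = vec n (\<lambda>i. complex_of_real (r i) * w $ i)"
  proof (rule eq_vecI)
    fix i assume "i < dim_vec (vec n (\<lambda>i. complex_of_real (r i) * w $ i))"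
    then have i: "i < n" by simp
    have "(mat_diag n (\<lambda>i. complex_of_real (r i)) *\<^sub>v w) $ i = (\<Sum>j<n. w $ j * (if j = i then complex_of_real (r i) else 0))"
      unfolding mult_mat_vec_index_sum[OF mat_diag_dim w i]
      using i by (intro sum.cong) (auto simp: mat_diag_def)
    then show "(mat_diag n (\<lambda>i. complex_of_real (r i)) *\<^sub>v w) $ i = vec n (\<lambda>i. complex_of_real (r i) * w $ i) $ i"
      using sum_mult_delta[OF i] i by (simp add: mult.commute)
  qed (simp add: mat_diag_def)
  then have "(mat_diag n (\<lambda>i. complex_of_real (r i)) *\<^sub>v w) \<bullet>c w = (\<Sum>i<n. complex_of_real (r i) * w $ i * cnj (w $ i))"
    using w by (simp add: cscalar_prod_eq_sum[of _ n])
  also have "\<dots> = complex_of_real (\<Sum>i<n. r i * (cmod (w $ i))\<^sup>2)"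
    by (simp add: mult.assoc flip: complex_norm_square)
  finally show "Im ((mat_diag n (\<lambda>i. complex_of_real (r i)) *\<^sub>v w) \<bullet>c w) = 0 \<and>
    0 \<le> Re ((mat_diag n (\<lambda>i. complex_of_real (r i)) *\<^sub>v w) \<bullet>c w)"
    using r by (auto intro!: sum_nonneg)
qed

lemma eigenbasis_diagonalizes:
  fixes A :: "complex mat"
  assumes A: "A \<in> carrier_mat n n" and us: "orthonormal n us"
    and lam: "\<And>i. i < n \<Longrightarrow> A *\<^sub>v us ! i = lam i \<cdot>\<^sub>v us ! i"
  shows "A * mat_of_cols n us = mat_of_cols n us * mat_diag n lam"
proof -
  define U where "U = mat_of_cols n us"
  have U: "U \<in> carrier_mat n n" unfolding U_def using us orthonormal_unitary(1) by blast
  have usc: "us ! j \<in> carrier_vec n" and len: "length us = n" if "j < n" for j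
    using that us unfolding orthonormal_def by auto
  have entry: "(A * U) $$ (i,j) = (U * mat_diag n lam) $$ (i,j)" if ij: "i < n" "j < n" for i j
  proof -
    have "(A * U) $$ (i,j) = (A *\<^sub>v us ! j) $ i"
      using A U ij usc[OF ij(2)] len[OF ij(2)] unfolding U_def by simp
    also have "\<dots> = U $$ (i,j) * lam j"
      using lam[OF ij(2)] usc[OF ij(2)] len[OF ij(2)] ij unfolding U_def
      by (simp add: mat_of_cols_def mult.commute)
    also have "\<dots> = (U * mat_diag n lam) $$ (i,j)"
      using mat_diag_mult_right[OF U, of lam] ij by simp
    finally show ?thesis .
  qed
  show ?thesis unfolding U_def[symmetric]
  proof (rule eq_matI)
    fix i j assume "i < dim_row (U * mat_diag n lam)" "j < dim_col (U * mat_diag n lam)"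
    with U have "i < n" "j < n" by (simp_all add: mat_diag_def)
    then show "(A * U) $$ (i, j) = (U * mat_diag n lam) $$ (i, j)" by (rule entry)
  qed (use A U in \<open>simp_all add: mat_diag_def\<close>)
qed

lemma psd_spectral:
  fixes A :: "complex mat"
  assumes A: "A \<in> carrier_mat n n" and pA: "psd A"
  shows "\<exists>us r. orthonormal n us \<and> (\<forall>i<n. 0 \<le> r i \<and> A *\<^sub>v us ! i = complex_of_real ((r i)\<^sup>2) \<cdot>\<^sub>v us ! i)"
proof -
  obtain us where us: "eigenbasis A n us"
    using hermitian_eigenbasis[OF A psd_hermitian[OF pA A]] by blast
  then have usc: "\<And>i. i < n \<Longrightarrow> us ! i \<in> carrier_vec n"
    and norm: "\<And>i. i < n \<Longrightarrow> us ! i \<bullet>c us ! i = 1"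
    and ev: "\<And>i. i < n \<Longrightarrow> \<exists>l. A *\<^sub>v us ! i = l \<cdot>\<^sub>v us ! i"
    unfolding eigenbasis_def orthonormal_def by auto
  have "\<exists>r \<ge> 0. A *\<^sub>v us ! i = complex_of_real (r\<^sup>2) \<cdot>\<^sub>v us ! i" if i: "i < n" for i
  proof -
    obtain l where l: "A *\<^sub>v us ! i = l \<cdot>\<^sub>v us ! i" using ev[OF i] by blast
    then show ?thesis
      using psd_eigenvalue_square[OF usc[OF i] norm[OF i] l psdD[OF pA A usc[OF i], THEN conjunct1]
          psdD[OF pA A usc[OF i], THEN conjunct2]] by auto
  qed
  then have "\<forall>i\<in>{..<n}. \<exists>r. 0 \<le> r \<and> A *\<^sub>v us ! i = complex_of_real (r\<^sup>2) \<cdot>\<^sub>v us ! i" by auto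
  from bchoice[OF this] show ?thesis using us unfolding eigenbasis_def by auto
qed

lemma psd_sqrt_exists:
  fixes A :: "complex mat"
  assumes A: "A \<in> carrier_mat n n" and pA: "psd A"
  shows "\<exists>B. B \<in> carrier_mat n n \<and> psd B \<and> B * B = A"
proof -
  obtain us r where o: "orthonormal n us"
    and r: "\<And>i. i < n \<Longrightarrow> 0 \<le> r i" "\<And>i. i < n \<Longrightarrow> A *\<^sub>v us ! i = complex_of_real ((r i)\<^sup>2) \<cdot>\<^sub>v us ! i"
    using psd_spectral[OF A pA] by blast
  define U where "U = mat_of_cols n us"
  note U = orthonormal_unitary[OF o, folded U_def]
  have aU: "mat_adjoint U \<in> carrier_mat n n" using U by simp
  define D where "D = mat_diag n (\<lambda>i. complex_of_real (r i))"
  have D: "D \<in> carrier_mat n n" "psd D" unfolding D_def using mat_diag_nonneg_psd r(1) by auto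
  have DD: "D * D = mat_diag n (\<lambda>i. complex_of_real ((r i)\<^sup>2))"
    unfolding D_def mat_diag_diag by (simp add: power2_eq_square)
  have AU: "A * U = U * (D * D)"
    unfolding DD U_def by (rule eigenbasis_diagonalizes[OF A o r(2)])
  define B where "B = U * D * mat_adjoint U"
  have Bc: "B \<in> carrier_mat n n"
    unfolding B_def using mult_carrier_mat[OF mult_carrier_mat[OF U(1) D(1)] aU] .
  define P where "P = U * D"
  have P: "P \<in> carrier_mat n n" unfolding P_def using mult_carrier_mat[OF U(1) D(1)] .
  have "mat_adjoint U * P = D" unfolding P_def
    using assoc_mult_mat[OF aU U(1) D(1)] U D by simp
  have "B * B = P * (mat_adjoint U * (P * mat_adjoint U))"
    unfolding B_def P_def[symmetric] using assoc_mult_mat[OF P aU, of "P * mat_adjoint U" n] P aU by simp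
  also have "mat_adjoint U * (P * mat_adjoint U) = D * mat_adjoint U"
    using assoc_mult_mat[OF aU P aU] \<open>mat_adjoint U * P = D\<close> by simp
  also have "P * (D * mat_adjoint U) = (P * D) * mat_adjoint U"
    using assoc_mult_mat[OF P D(1) aU] by simp
  also have "P * D = A * U"
    unfolding AU P_def using assoc_mult_mat[OF U(1) D(1) D(1)] by simp
  also have "A * U * mat_adjoint U = A"
    using assoc_mult_mat[OF A U(1) aU] U(3) A by simp
  finally have "B * B = A" .
  moreover have "psd B"
    using psd_congruence[OF D(1,2) aU] unfolding B_def by simp
  ultimately show ?thesis using Bc by blast
qed

lemma msqrt_eqI:
  assumes B: "B \<in> carrier_mat n n" and pB: "psd B" and BB: "B * B = A"
  shows "msqrt A = B"
proof -
  have n: "dim_row A = n" using B BB by auto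
  show ?thesis unfolding msqrt_def n
  proof (rule the_equality)
    show "B \<in> carrier_mat n n \<and> psd B \<and> B * B = A" using B pB BB by simp
    fix X assume "X \<in> carrier_mat n n \<and> psd X \<and> X * X = A"
    then show "X = B" using psd_sqrt_unique[of X n B] B pB BB by simp
  qed
qed

lemma msqrt:
  assumes A: "A \<in> carrier_mat n n" and pA: "psd A"
  shows "msqrt A \<in> carrier_mat n n" "psd (msqrt A)" "msqrt A * msqrt A = A"
proof -
  obtain B where B: "B \<in> carrier_mat n n" "psd B" "B * B = A"
    using psd_sqrt_exists[OF A pA] by blast
  then have "msqrt A = B" by (rule msqrt_eqI)
  then show "msqrt A \<in> carrier_mat n n" "psd (msqrt A)" "msqrt A * msqrt A = A" using B by simp_all
qed

lemma mtrace_add: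
  "(A :: complex mat) \<in> carrier_mat d d \<Longrightarrow> B \<in> carrier_mat d d \<Longrightarrow> mtrace (A + B) = mtrace A + mtrace B"
  unfolding mtrace_def by (simp add: sum.distrib)

lemma mtrace_smult: "(A :: complex mat) \<in> carrier_mat d d \<Longrightarrow> mtrace (c \<cdot>\<^sub>m A) = c * mtrace A"
  unfolding mtrace_def by (simp add: sum_distrib_left)

lemma smult_mat_mult_vec:
  "(A :: complex mat) \<in> carrier_mat n m \<Longrightarrow> x \<in> carrier_vec m \<Longrightarrow> (c \<cdot>\<^sub>m A) *\<^sub>v x = c \<cdot>\<^sub>v (A *\<^sub>v x)"
  by (intro eq_vecI) (auto simp: scalar_prod_def sum_distrib_left mult.assoc)

lemma psd_add:
  assumes A: "A \<in> carrier_mat n n" and B: "B \<in> carrier_mat n n" and pA: "psd A" and pB: "psd B"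
  shows "psd (A + B)"
proof (rule psdI)
  show "A + B \<in> carrier_mat n n" using A B by simp
  fix v :: "complex vec" assume v: "v \<in> carrier_vec n"
  have "((A + B) *\<^sub>v v) \<bullet>c v = (A *\<^sub>v v) \<bullet>c v + (B *\<^sub>v v) \<bullet>c v"
    using A B v by (simp add: add_mult_distrib_mat_vec[OF A B v] cscalar_prod_add_left[of _ n])
  then show "Im (((A + B) *\<^sub>v v) \<bullet>c v) = 0 \<and> 0 \<le> Re (((A + B) *\<^sub>v v) \<bullet>c v)"
    using psdD[OF pA A v] psdD[OF pB B v] by simp
qed

lemma psd_smult:
  assumes A: "A \<in> carrier_mat n n" and pA: "psd A" and c: "0 \<le> c"
  shows "psd (complex_of_real c \<cdot>\<^sub>m A)"
proof (rule psdI)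
  show "complex_of_real c \<cdot>\<^sub>m A \<in> carrier_mat n n" using A by simp
  fix v :: "complex vec" assume v: "v \<in> carrier_vec n"
  have "((complex_of_real c \<cdot>\<^sub>m A) *\<^sub>v v) \<bullet>c v = complex_of_real c * ((A *\<^sub>v v) \<bullet>c v)"
    using A v by (simp add: smult_mat_mult_vec[OF A v] cscalar_prod_smult_left[of _ n])
  then show "Im (((complex_of_real c \<cdot>\<^sub>m A) *\<^sub>v v) \<bullet>c v) = 0 \<and> 0 \<le> Re (((complex_of_real c \<cdot>\<^sub>m A) *\<^sub>v v) \<bullet>c v)"
    using psdD[OF pA A v] c by simp
qed

lemma ketbra_dims[simp]: "dim_row (ketbra v) = dim_vec v" "dim_col (ketbra v) = dim_vec v"
  unfolding ketbra_def by simp_all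

lemma ketbra_carrier[simp]: "v \<in> carrier_vec d \<Longrightarrow> ketbra v \<in> carrier_mat d d"
  unfolding ketbra_def by auto

lemma ketbra_mult_vec:
  assumes v: "v \<in> carrier_vec d" and x: "x \<in> carrier_vec d"
  shows "ketbra v *\<^sub>v x = (x \<bullet>c v) \<cdot>\<^sub>v v"
proof (rule eq_vecI)
  fix i assume "i < dim_vec ((x \<bullet>c v) \<cdot>\<^sub>v v)"
  then have i: "i < d" using v by simp
  have "(ketbra v *\<^sub>v x) $ i = v $ i * (\<Sum>k<d. x $ k * cnj (v $ k))"
    unfolding mult_mat_vec_index_sum[OF ketbra_carrier[OF v] x i] sum_distrib_left
    using v i by (auto simp: ketbra_def intro!: sum.cong)
  then show "(ketbra v *\<^sub>v x) $ i = ((x \<bullet>c v) \<cdot>\<^sub>v v) $ i"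
    using i v x by (simp add: cscalar_prod_eq_sum[of _ d])
qed (use v in simp)

lemma ketbra_trace: "v \<in> carrier_vec d \<Longrightarrow> mtrace (ketbra v) = v \<bullet>c v"
  unfolding mtrace_def ketbra_def by (simp add: cscalar_prod_eq_sum[of _ d])

lemma psd_ketbra:
  assumes v: "v \<in> carrier_vec d"
  shows "psd (ketbra v)"
proof (rule psdI[OF ketbra_carrier[OF v]])
  fix x :: "complex vec" assume x: "x \<in> carrier_vec d"
  have "(ketbra v *\<^sub>v x) \<bullet>c x = (x \<bullet>c v) * cnj (x \<bullet>c v)"
    unfolding ketbra_mult_vec[OF v x] using v x
    by (simp add: cscalar_prod_smult_left[of _ d] cscalar_prod_swap[OF x v])
  also have "\<dots> = complex_of_real ((cmod (x \<bullet>c v))\<^sup>2)" by (rule complex_norm_square[symmetric])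
  finally show "Im ((ketbra v *\<^sub>v x) \<bullet>c x) = 0 \<and> 0 \<le> Re ((ketbra v *\<^sub>v x) \<bullet>c x)" by simp
qed

lemma ketbra_density:
  assumes v: "v \<in> carrier_vec d" and vv: "v \<bullet>c v = 1"
  shows "density d (ketbra v)"
  unfolding density_def using v psd_ketbra[OF v] ketbra_trace[OF v] vv by simp

section \<open>The erasure channel\<close>

lemma densityD:
  assumes "density d \<rho>"
  shows "\<rho> \<in> carrier_mat d d" "psd \<rho>" "mtrace \<rho> = 1"
  using assms unfolding density_def by simp_all

lemma erasure_carrier[simp]: "erasure d \<eta> \<rho> \<in> carrier_mat (d + 1) (d + 1)"
  unfolding erasure_def by simp

lemma erasure_dims[simp]: "dim_row (erasure d \<eta> \<rho>) = Suc d" "dim_col (erasure d \<eta> \<rho>) = Suc d"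
  unfolding erasure_def by simp_all

lemma erasure_mult_vec_index:
  assumes x: "x \<in> carrier_vec (d + 1)" and i: "i < d + 1"
  shows "(erasure d \<eta> \<rho> *\<^sub>v x) $ i =
    (if i < d then complex_of_real (1 - \<eta>) * (\<Sum>k<d. \<rho> $$ (i,k) * x $ k)
     else complex_of_real \<eta> * mtrace \<rho> * x $ d)"
proof -
  have "(erasure d \<eta> \<rho> *\<^sub>v x) $ i = (\<Sum>k<d. erasure d \<eta> \<rho> $$ (i,k) * x $ k) + erasure d \<eta> \<rho> $$ (i,d) * x $ d"
    using mult_mat_vec_index_sum[OF erasure_carrier x i] by simp
  also have "\<dots> = (if i < d then complex_of_real (1 - \<eta>) * (\<Sum>k<d. \<rho> $$ (i,k) * x $ k)
     else complex_of_real \<eta> * mtrace \<rho> * x $ d)"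
  proof (cases "i < d")
    case True
    then show ?thesis using i by (simp add: erasure_def sum_distrib_left mult.assoc)
  next
    case False
    then have "i = d" using i by simp
    then show ?thesis by (simp add: erasure_def)
  qed
  finally show ?thesis .
qed

lemma erasure_mult_alpha:
  assumes \<rho>: "\<rho> \<in> carrier_mat d d"
  shows "erasure d \<eta> \<rho> *\<^sub>v unit_vec (d + 1) d = (complex_of_real \<eta> * mtrace \<rho>) \<cdot>\<^sub>v unit_vec (d + 1) d"
proof (rule eq_vecI)
  fix i assume "i < dim_vec ((complex_of_real \<eta> * mtrace \<rho>) \<cdot>\<^sub>v unit_vec (d + 1) d)"
  then have i: "i < d + 1" by simp
  show "(erasure d \<eta> \<rho> *\<^sub>v unit_vec (d + 1) d) $ i = ((complex_of_real \<eta> * mtrace \<rho>) \<cdot>\<^sub>v unit_vec (d + 1) d) $ i"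
    unfolding erasure_mult_vec_index[OF unit_vec_carrier i] using i by auto
qed simp

lemma erasure_density_mult_alpha:
  "density d \<rho> \<Longrightarrow> erasure d \<eta> \<rho> *\<^sub>v unit_vec (d + 1) d = complex_of_real \<eta> \<cdot>\<^sub>v unit_vec (d + 1) d"
  using erasure_mult_alpha[OF densityD(1)] densityD(3) by simp

lemma erasure_quadratic_form:
  assumes x: "x \<in> carrier_vec (d + 1)" and \<rho>: "\<rho> \<in> carrier_mat d d"
  shows "(erasure d \<eta> \<rho> *\<^sub>v x) \<bullet>c x =
    complex_of_real (1 - \<eta>) * ((\<rho> *\<^sub>v vec_first x d) \<bullet>c vec_first x d)
    + complex_of_real \<eta> * mtrace \<rho> * (x $ d * cnj (x $ d))"
proof -
  have Ex: "erasure d \<eta> \<rho> *\<^sub>v x \<in> carrier_vec (d + 1)"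
    using mult_mat_vec_carrier[OF erasure_carrier x] .
  have first: "vec_first x d $ i = x $ i" if "i < d" for i
    using that by (simp add: vec_first_def)
  have first_mult: "(\<rho> *\<^sub>v vec_first x d) $ i = (\<Sum>k<d. \<rho> $$ (i,k) * x $ k)" if i: "i < d" for i
    unfolding mult_mat_vec_index_sum[OF \<rho> vec_first_carrier i] by (simp add: first)
  have "(erasure d \<eta> \<rho> *\<^sub>v x) \<bullet>c x =
      (\<Sum>i<d. (erasure d \<eta> \<rho> *\<^sub>v x) $ i * cnj (x $ i)) + (erasure d \<eta> \<rho> *\<^sub>v x) $ d * cnj (x $ d)"
    using cscalar_prod_eq_sum[OF Ex x] by simp
  also have "(\<Sum>i<d. (erasure d \<eta> \<rho> *\<^sub>v x) $ i * cnj (x $ i))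
      = complex_of_real (1 - \<eta>) * ((\<rho> *\<^sub>v vec_first x d) \<bullet>c vec_first x d)"
    unfolding cscalar_prod_eq_sum[OF mult_mat_vec_carrier[OF \<rho> vec_first_carrier] vec_first_carrier] sum_distrib_left
  proof (rule sum.cong[OF refl])
    fix i assume "i \<in> {..<d}"
    then have i: "i < d" by simp
    have "(erasure d \<eta> \<rho> *\<^sub>v x) $ i = complex_of_real (1 - \<eta>) * (\<Sum>k<d. \<rho> $$ (i,k) * x $ k)"
      using erasure_mult_vec_index[OF x, of i] i by simp
    then show "(erasure d \<eta> \<rho> *\<^sub>v x) $ i * cnj (x $ i) =
      complex_of_real (1 - \<eta>) * ((\<rho> *\<^sub>v vec_first x d) $ i * cnj (vec_first x d $ i))"
      unfolding first[OF i] first_mult[OF i] by simp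
  qed
  also have "(erasure d \<eta> \<rho> *\<^sub>v x) $ d * cnj (x $ d) = complex_of_real \<eta> * mtrace \<rho> * (x $ d * cnj (x $ d))"
    unfolding erasure_mult_vec_index[OF x, of d, OF less_add_one] by simp
  finally show ?thesis .
qed

lemma erasure_psd:
  assumes \<rho>: "density d \<rho>" and \<eta>: "0 \<le> \<eta>" "\<eta> \<le> 1"
  shows "psd (erasure d \<eta> \<rho>)"
proof (rule psdI[OF erasure_carrier])
  fix x :: "complex vec" assume x: "x \<in> carrier_vec (d + 1)"
  note \<rho>' = densityD[OF \<rho>]
  have "x $ d * cnj (x $ d) = complex_of_real ((cmod (x $ d))\<^sup>2)" by (rule complex_norm_square[symmetric])
  then show "Im ((erasure d \<eta> \<rho> *\<^sub>v x) \<bullet>c x) = 0 \<and> 0 \<le> Re ((erasure d \<eta> \<rho> *\<^sub>v x) \<bullet>c x)"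
    unfolding erasure_quadratic_form[OF x \<rho>'(1)] \<rho>'(3)
    using psdD[OF \<rho>'(2,1) vec_first_carrier[of x d]] \<eta> by simp
qed

definition pad_vec :: "nat \<Rightarrow> complex vec \<Rightarrow> complex vec" where
  "pad_vec d v = vec (d + 1) (\<lambda>i. if i < d then v $ i else 0)"

lemma pad_vec_carrier: "pad_vec d v \<in> carrier_vec (d + 1)"
  unfolding pad_vec_def by simp

lemma pad_vec_carrier_Suc[simp]: "pad_vec d v \<in> carrier_vec (Suc d)"
  unfolding pad_vec_def by simp

lemma cscalar_prod_pad_vec:
  assumes x: "x \<in> carrier_vec (d + 1)" and v: "v \<in> carrier_vec d"
  shows "x \<bullet>c pad_vec d v = (\<Sum>k<d. x $ k * cnj (v $ k))"
  unfolding cscalar_prod_eq_sum[OF x pad_vec_carrier] by (simp add: pad_vec_def)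

lemma cscalar_prod_alpha:
  assumes x: "(x :: complex vec) \<in> carrier_vec (d + 1)"
  shows "x \<bullet>c unit_vec (d + 1) d = x $ d"
  unfolding cscalar_prod_eq_sum[OF x unit_vec_carrier]
  using sum_mult_delta[of d "d + 1" "\<lambda>i. x $ i" 1] by (simp add: unit_vec_def cong: if_cong)

lemma erasure_ketbra_mult_vec:
  assumes \<phi>: "\<phi> \<in> carrier_vec d" "\<phi> \<bullet>c \<phi> = 1" and x: "x \<in> carrier_vec (d + 1)"
  shows "erasure d \<eta> (ketbra \<phi>) *\<^sub>v x =
    (complex_of_real (1 - \<eta>) * (x \<bullet>c pad_vec d \<phi>)) \<cdot>\<^sub>v pad_vec d \<phi>
    + (complex_of_real \<eta> * x $ d) \<cdot>\<^sub>v unit_vec (d + 1) d"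
proof (rule eq_vecI)
  fix i assume "i < dim_vec ((complex_of_real (1 - \<eta>) * (x \<bullet>c pad_vec d \<phi>)) \<cdot>\<^sub>v pad_vec d \<phi>
    + (complex_of_real \<eta> * x $ d) \<cdot>\<^sub>v unit_vec (d + 1) d)"
  then have i: "i < d + 1" by (simp add: pad_vec_def)
  have tr: "mtrace (ketbra \<phi>) = 1" using ketbra_trace[OF \<phi>(1)] \<phi>(2) by simp
  show "(erasure d \<eta> (ketbra \<phi>) *\<^sub>v x) $ i = ((complex_of_real (1 - \<eta>) * (x \<bullet>c pad_vec d \<phi>)) \<cdot>\<^sub>v pad_vec d \<phi>
    + (complex_of_real \<eta> * x $ d) \<cdot>\<^sub>v unit_vec (d + 1) d) $ i"
  proof (cases "i < d")
    case True
    have "(\<Sum>k<d. ketbra \<phi> $$ (i,k) * x $ k) = \<phi> $ i * (\<Sum>k<d. x $ k * cnj (\<phi> $ k))"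
      unfolding sum_distrib_left using True \<phi> by (auto simp: ketbra_def intro!: sum.cong)
    then show ?thesis unfolding erasure_mult_vec_index[OF x i] cscalar_prod_pad_vec[OF x \<phi>(1)]
      using True i by (simp add: pad_vec_def)
  next
    case False
    then show ?thesis unfolding erasure_mult_vec_index[OF x i] using i tr by (simp add: pad_vec_def)
  qed
qed (simp add: pad_vec_def)

lemma erasure_mult_pad_vec_zero:
  assumes \<phi>: "\<phi> \<in> carrier_vec d" and \<sigma>: "\<sigma> \<in> carrier_mat d d" and ker: "\<sigma> *\<^sub>v \<phi> = 0\<^sub>v d"
  shows "erasure d \<eta> \<sigma> *\<^sub>v pad_vec d \<phi> = 0\<^sub>v (d + 1)"
proof (rule eq_vecI)
  fix i assume "i < dim_vec (0\<^sub>v (d + 1) :: complex vec)"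
  then have i: "i < d + 1" by simp
  show "(erasure d \<eta> \<sigma> *\<^sub>v pad_vec d \<phi>) $ i = 0\<^sub>v (d + 1) $ i"
  proof (cases "i < d")
    case True
    have "(\<Sum>k<d. \<sigma> $$ (i,k) * pad_vec d \<phi> $ k) = (\<sigma> *\<^sub>v \<phi>) $ i"
      unfolding mult_mat_vec_index_sum[OF \<sigma> \<phi> True] by (rule sum.cong) (auto simp: pad_vec_def)
    then show ?thesis unfolding erasure_mult_vec_index[OF pad_vec_carrier i] using True i ker by simp
  next
    case False
    then show ?thesis unfolding erasure_mult_vec_index[OF pad_vec_carrier i] using i by (simp add: pad_vec_def)
  qed
qed simp

definition proj_comb :: "complex vec \<Rightarrow> real \<Rightarrow> complex vec \<Rightarrow> real \<Rightarrow> complex mat" where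
  "proj_comb u a w b = complex_of_real a \<cdot>\<^sub>m ketbra u + complex_of_real b \<cdot>\<^sub>m ketbra w"

locale orthonormal_pair =
  fixes n :: nat and u w :: "complex vec"
  assumes u: "u \<in> carrier_vec n" and w: "w \<in> carrier_vec n"
    and uu: "u \<bullet>c u = 1" and ww: "w \<bullet>c w = 1" and uw: "u \<bullet>c w = 0"
begin

lemma wu: "w \<bullet>c u = 0"
  using cscalar_prod_swap[OF u w] uw by simp

lemma proj_comb_carrier: "proj_comb u a w b \<in> carrier_mat n n"
  unfolding proj_comb_def using u w by simp

lemma proj_comb_mult_vec:
  assumes x: "x \<in> carrier_vec n"
  shows "proj_comb u a w b *\<^sub>v x = (complex_of_real a * (x \<bullet>c u)) \<cdot>\<^sub>v u + (complex_of_real b * (x \<bullet>c w)) \<cdot>\<^sub>v w"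
  unfolding proj_comb_def using u w x
  by (simp add: add_mult_distrib_mat_vec[of _ n n] smult_mat_mult_vec[of _ n n] ketbra_mult_vec
      smult_smult_assoc)

lemma proj_comb_mult_vec_comb:
  "proj_comb u a w b *\<^sub>v (c \<cdot>\<^sub>v u + e \<cdot>\<^sub>v w) = (complex_of_real a * c) \<cdot>\<^sub>v u + (complex_of_real b * e) \<cdot>\<^sub>v w"
proof -
  have "(c \<cdot>\<^sub>v u + e \<cdot>\<^sub>v w) \<bullet>c u = c" "(c \<cdot>\<^sub>v u + e \<cdot>\<^sub>v w) \<bullet>c w = e"
    using u w uu ww uw wu
    by (simp_all add: cscalar_prod_add_left[of _ n] cscalar_prod_smult_left[of _ n])
  then show ?thesis using proj_comb_mult_vec[of "c \<cdot>\<^sub>v u + e \<cdot>\<^sub>v w"] u w by simp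
qed

lemma proj_comb_mult:
  "proj_comb u a w b * proj_comb u a' w b' = proj_comb u (a * a') w (b * b')"
proof (rule mat_eq_by_mult_vec[of _ n])
  fix x :: "complex vec" assume x: "x \<in> carrier_vec n"
  have "(proj_comb u a w b * proj_comb u a' w b') *\<^sub>v x = proj_comb u a w b *\<^sub>v (proj_comb u a' w b' *\<^sub>v x)"
    using assoc_mult_mat_vec[OF proj_comb_carrier proj_comb_carrier x] .
  also have "\<dots> = proj_comb u (a * a') w (b * b') *\<^sub>v x"
    unfolding proj_comb_mult_vec[OF x] proj_comb_mult_vec_comb by (simp add: mult.assoc)
  finally show "(proj_comb u a w b * proj_comb u a' w b') *\<^sub>v x = proj_comb u (a * a') w (b * b') *\<^sub>v x" .
qed (use mult_carrier_mat[OF proj_comb_carrier proj_comb_carrier] proj_comb_carrier in simp_all)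

lemma proj_comb_psd: "0 \<le> a \<Longrightarrow> 0 \<le> b \<Longrightarrow> psd (proj_comb u a w b)"
  unfolding proj_comb_def using u w
  by (intro psd_add[of _ n] psd_smult[of _ n] psd_ketbra) simp_all

lemma mtrace_proj_comb: "mtrace (proj_comb u a w b) = complex_of_real (a + b)"
  unfolding proj_comb_def using u w uu ww
  by (simp add: mtrace_add[of _ n] mtrace_smult[of _ n] ketbra_trace)

lemma msqrt_proj_comb: "0 \<le> a \<Longrightarrow> 0 \<le> b \<Longrightarrow> msqrt (proj_comb u (a\<^sup>2) w (b\<^sup>2)) = proj_comb u a w b"
  by (rule msqrt_eqI[OF proj_comb_carrier proj_comb_psd]) (simp_all add: proj_comb_mult power2_eq_square)

lemma proj_comb_sandwich:
  assumes E: "E \<in> carrier_mat n n" and Eu: "E *\<^sub>v u = 0\<^sub>v n" and Ew: "E *\<^sub>v w = complex_of_real c \<cdot>\<^sub>v w"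
  shows "proj_comb u a w b * E * proj_comb u a w b = proj_comb u 0 w (b\<^sup>2 * c)"
proof (rule mat_eq_by_mult_vec[of _ n])
  fix x :: "complex vec" assume x: "x \<in> carrier_vec n"
  define z where "z = complex_of_real b * (x \<bullet>c w)"
  have "E *\<^sub>v (proj_comb u a w b *\<^sub>v x) = 0 \<cdot>\<^sub>v u + (complex_of_real c * z) \<cdot>\<^sub>v w"
    unfolding proj_comb_mult_vec[OF x] z_def[symmetric] using E u w Eu Ew
    by (simp add: mult_add_distrib_mat_vec[of _ n n] mult_mat_vec[of _ n n], intro eq_vecI, simp_all)
  then have "proj_comb u a w b *\<^sub>v (E *\<^sub>v (proj_comb u a w b *\<^sub>v x)) =
      (complex_of_real a * 0) \<cdot>\<^sub>v u + (complex_of_real b * (complex_of_real c * z)) \<cdot>\<^sub>v w"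
    by (simp only: proj_comb_mult_vec_comb)
  also have "\<dots> = proj_comb u 0 w (b\<^sup>2 * c) *\<^sub>v x"
    unfolding proj_comb_mult_vec[OF x] z_def by (simp add: power2_eq_square mult_ac)
  finally show "(proj_comb u a w b * E * proj_comb u a w b) *\<^sub>v x = proj_comb u 0 w (b\<^sup>2 * c) *\<^sub>v x"
    using mult_mat_vec_assoc3[OF proj_comb_carrier E proj_comb_carrier x] by simp
qed (use mult_carrier_mat[OF mult_carrier_mat[OF proj_comb_carrier E] proj_comb_carrier]
    proj_comb_carrier in simp_all)

end

section \<open>Fidelity of erased states\<close>

lemma msqrt_eigenvector:
  assumes A: "A \<in> carrier_mat n n" and pA: "psd A" and v: "v \<in> carrier_vec n"
    and ev: "A *\<^sub>v v = complex_of_real (l\<^sup>2) \<cdot>\<^sub>v v" and l: "0 \<le> l"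
  shows "msqrt A *\<^sub>v v = complex_of_real l \<cdot>\<^sub>v v"
  using psd_eigenvector_of_square[OF msqrt(1,2)[OF A pA] v _ l] msqrt(3)[OF A pA] ev by simp

lemma psd_diag_le_trace:
  assumes p: "psd T" and T: "T \<in> carrier_mat n n" and i: "i < n"
  shows "Re (T $$ (i,i)) \<le> Re (mtrace T)"
proof -
  have "Re (mtrace T) = (\<Sum>k<n. Re (T $$ (k,k)))" unfolding mtrace_def using T by simp
  also have "Re (T $$ (i,i)) \<le> \<dots>"
    using psd_diag_nonneg[OF p T] i by (intro member_le_sum) auto
  finally show ?thesis by simp
qed

lemma fidelity_erasure_lower:
  assumes \<rho>: "density d \<rho>" and \<sigma>: "density d \<sigma>" and \<eta>: "0 \<le> \<eta>" "\<eta> \<le> 1"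
  shows "\<eta>\<^sup>2 \<le> fidelity (erasure d \<eta> \<rho>) (erasure d \<eta> \<sigma>)"
proof -
  let ?N = "d + 1" and ?a = "unit_vec (d + 1) d :: complex vec"
  have a: "?a \<in> carrier_vec ?N" by simp
  define Er where "Er = erasure d \<eta> \<rho>"
  define Es where "Es = erasure d \<eta> \<sigma>"
  have Er: "Er \<in> carrier_mat ?N ?N" "psd Er" unfolding Er_def using erasure_psd[OF \<rho> \<eta>] by auto
  have Es: "Es \<in> carrier_mat ?N ?N" "psd Es" unfolding Es_def using erasure_psd[OF \<sigma> \<eta>] by auto
  define S where "S = msqrt Er"
  note S = msqrt[OF Er, folded S_def]
  have "Er *\<^sub>v ?a = complex_of_real ((sqrt \<eta>)\<^sup>2) \<cdot>\<^sub>v ?a"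
    unfolding Er_def using erasure_density_mult_alpha[OF \<rho>] \<eta> by simp
  then have Sa: "S *\<^sub>v ?a = complex_of_real (sqrt \<eta>) \<cdot>\<^sub>v ?a"
    unfolding S_def by (rule msqrt_eigenvector[OF Er a _ real_sqrt_ge_zero[OF \<eta>(1)]])
  define M where "M = S * Es * S"
  have M: "M \<in> carrier_mat ?N ?N" "psd M"
    using psd_congruence[OF Es S(1)] psd_hermitian[OF S(2,1)] S(1) Es(1)
    unfolding M_def by simp_all
  have "complex_of_real (sqrt \<eta>) * complex_of_real \<eta> * complex_of_real (sqrt \<eta>) = complex_of_real (\<eta>\<^sup>2)"
    using \<eta> by (simp add: power2_eq_square mult_ac flip: of_real_mult)
  then have Ma: "M *\<^sub>v ?a = complex_of_real (\<eta>\<^sup>2) \<cdot>\<^sub>v ?a"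
    unfolding M_def Es_def using sandwich_common_eigenvector[OF S(1) Es(1)[unfolded Es_def] a Sa
        erasure_density_mult_alpha[OF \<sigma>]] by simp
  define T where "T = msqrt M"
  note T = msqrt[OF M, folded T_def]
  have "T *\<^sub>v ?a = complex_of_real \<eta> \<cdot>\<^sub>v ?a"
    unfolding T_def using msqrt_eigenvector[OF M a Ma \<eta>(1)] .
  then have "T $$ (d,d) = complex_of_real \<eta>"
    using quadratic_form_unit_vec[OF T(1), of d] by (simp add: cscalar_prod_smult_left[of _ ?N])
  then have "\<eta> \<le> Re (mtrace T)"
    using psd_diag_le_trace[OF T(2,1), of d] by simp
  moreover have "fidelity Er Es = (Re (mtrace T))\<^sup>2"
    unfolding fidelity_def T_def M_def S_def ..
  ultimately show ?thesis unfolding Er_def Es_def using \<eta> by (simp add: power_mono)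
qed

lemma orthonormal_pair_pad_alpha:
  assumes \<phi>: "\<phi> \<in> carrier_vec d" "\<phi> \<bullet>c \<phi> = 1"
  shows "orthonormal_pair (d + 1) (pad_vec d \<phi>) (unit_vec (d + 1) d)"
proof
  show "pad_vec d \<phi> \<bullet>c pad_vec d \<phi> = 1"
    unfolding cscalar_prod_pad_vec[OF pad_vec_carrier \<phi>(1)] using \<phi>
    by (simp add: cscalar_prod_eq_sum[OF \<phi>(1) \<phi>(1)] pad_vec_def)
  show "pad_vec d \<phi> \<bullet>c unit_vec (d + 1) d = 0"
    unfolding cscalar_prod_alpha[OF pad_vec_carrier] by (simp add: pad_vec_def)
qed (simp_all add: pad_vec_carrier cscalar_prod_alpha)

lemma erasure_pure_state:
  assumes \<phi>: "\<phi> \<in> carrier_vec d" "\<phi> \<bullet>c \<phi> = 1" and \<eta>: "0 \<le> \<eta>" "\<eta> \<le> 1"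
  shows "erasure d \<eta> (ketbra \<phi>) = proj_comb (pad_vec d \<phi>) ((sqrt (1 - \<eta>))\<^sup>2) (unit_vec (d + 1) d) ((sqrt \<eta>)\<^sup>2)"
proof -
  interpret orthonormal_pair "d + 1" "pad_vec d \<phi>" "unit_vec (d + 1) d"
    by (rule orthonormal_pair_pad_alpha[OF \<phi>])
  show ?thesis
  proof (rule mat_eq_by_mult_vec[OF erasure_carrier proj_comb_carrier])
    fix x :: "complex vec" assume x: "x \<in> carrier_vec (d + 1)"
    then show "erasure d \<eta> (ketbra \<phi>) *\<^sub>v x =
        proj_comb (pad_vec d \<phi>) ((sqrt (1 - \<eta>))\<^sup>2) (unit_vec (d + 1) d) ((sqrt \<eta>)\<^sup>2) *\<^sub>v x"
      unfolding erasure_ketbra_mult_vec[OF \<phi> x] proj_comb_mult_vec[OF x]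
      using \<eta> cscalar_prod_alpha[OF x] by simp
  qed
qed

lemma fidelity_erasure_orthogonal:
  assumes \<phi>: "\<phi> \<in> carrier_vec d" "\<phi> \<bullet>c \<phi> = 1" and \<sigma>: "density d \<sigma>" and ker: "\<sigma> *\<^sub>v \<phi> = 0\<^sub>v d"
    and \<eta>: "0 \<le> \<eta>" "\<eta> \<le> 1"
  shows "fidelity (erasure d \<eta> (ketbra \<phi>)) (erasure d \<eta> \<sigma>) = \<eta>\<^sup>2"
proof -
  let ?q = "pad_vec d \<phi>" and ?a = "unit_vec (d + 1) d :: complex vec"
  interpret orthonormal_pair "d + 1" ?q ?a by (rule orthonormal_pair_pad_alpha[OF \<phi>])
  have "msqrt (erasure d \<eta> (ketbra \<phi>)) = proj_comb ?q (sqrt (1 - \<eta>)) ?a (sqrt \<eta>)"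
    unfolding erasure_pure_state[OF \<phi> \<eta>] using \<eta> by (intro msqrt_proj_comb) simp_all
  moreover have "proj_comb ?q (sqrt (1 - \<eta>)) ?a (sqrt \<eta>) * erasure d \<eta> \<sigma> * proj_comb ?q (sqrt (1 - \<eta>)) ?a (sqrt \<eta>)
      = proj_comb ?q (0\<^sup>2) ?a (\<eta>\<^sup>2)"
    using proj_comb_sandwich[OF erasure_carrier erasure_mult_pad_vec_zero[OF \<phi>(1) densityD(1)[OF \<sigma>] ker]]
      erasure_density_mult_alpha[OF \<sigma>] \<eta>
    by (simp add: power2_eq_square)
  moreover have "msqrt (proj_comb ?q (0\<^sup>2) ?a (\<eta>\<^sup>2)) = proj_comb ?q 0 ?a \<eta>"
    using \<eta> by (intro msqrt_proj_comb) simp_all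
  ultimately have "fidelity (erasure d \<eta> (ketbra \<phi>)) (erasure d \<eta> \<sigma>) = (Re (mtrace (proj_comb ?q 0 ?a \<eta>)))\<^sup>2"
    unfolding fidelity_def by simp
  then show ?thesis unfolding mtrace_proj_comb by simp
qed

section \<open>Channels and the replacement channel\<close>

lemma ampl_one:
  assumes X: "X \<in> carrier_mat d d" and L: "\<Lambda> X \<in> carrier_mat d d"
  shows "ampl 1 d \<Lambda> X = \<Lambda> X"
proof (rule eq_matI)
  fix i j assume "i < dim_row (\<Lambda> X)" "j < dim_col (\<Lambda> X)"
  then have ij: "i < d" "j < d" using L by auto
  have "mat d d (\<lambda>(a, b). X $$ ((i div d) * d + a, (j div d) * d + b)) = X"
    using ij X by (intro eq_matI) auto
  then show "ampl 1 d \<Lambda> X $$ (i,j) = \<Lambda> X $$ (i,j)" unfolding ampl_def using ij by simp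
qed (use L in \<open>simp_all add: ampl_def\<close>)

lemma channel_density:
  assumes ch: "channel d \<Lambda>" and \<rho>: "density d \<rho>"
  shows "density d (\<Lambda> \<rho>)"
proof -
  note \<rho>' = densityD[OF \<rho>]
  have L: "\<Lambda> \<rho> \<in> carrier_mat d d" using ch \<rho>'(1) unfolding channel_def linear_map_on_def by auto
  have "mtrace (\<Lambda> \<rho>) = 1" using ch \<rho>' unfolding channel_def trace_preserving_def by auto
  moreover have "psd (ampl 1 d \<Lambda> \<rho>)"
    using ch \<rho>' unfolding channel_def completely_positive_def by auto
  ultimately show ?thesis
    unfolding density_def ampl_one[where X = \<rho> and \<Lambda> = \<Lambda>, OF \<rho>'(1) L] using L by simp
qed

lemma sum_blocks: "(\<Sum>p<(n::nat) * d. f p) = (\<Sum>i<n. \<Sum>b<d. f (i * d + b))"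
proof (induction n)
  case (Suc n)
  have "(\<Sum>p<Suc n * d. f p) = (\<Sum>p\<in>{0..<n*d}. f p) + (\<Sum>p\<in>{n*d..<n*d+d}. f p)"
    using sum.atLeastLessThan_concat[of 0 "n*d" "n*d+d" f] by (simp add: lessThan_atLeast0 add.commute)
  also have "(\<Sum>p\<in>{n*d..<n*d+d}. f p) = (\<Sum>b<d. f (n*d + b))"
    using sum.shift_bounds_nat_ivl[of f 0 "n*d" d] by (simp add: lessThan_atLeast0 add.commute)
  finally show ?case using Suc by (simp add: lessThan_atLeast0)
qed simp

lemma block_index_less: "i < n \<Longrightarrow> b < d \<Longrightarrow> i * d + b < n * (d::nat)"
proof -
  assume "i < n" "b < d"
  moreover from \<open>i < n\<close> have "Suc i * d \<le> n * d" by (intro mult_le_mono1) simp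
  ultimately show ?thesis by simp
qed

lemma quadratic_form_blocks:
  "(X :: complex mat) \<in> carrier_mat (n * d) (n * d) \<Longrightarrow> v \<in> carrier_vec (n * d) \<Longrightarrow>
   (X *\<^sub>v v) \<bullet>c v = (\<Sum>i<n. \<Sum>b<d. \<Sum>j<n. \<Sum>b'<d.
      X $$ (i * d + b, j * d + b') * v $ (j * d + b') * cnj (v $ (i * d + b)))"
  by (simp add: quadratic_form_sum sum_blocks)

lemma quadratic_form_slice:
  fixes X :: "complex mat" and w :: "nat \<Rightarrow> complex"
  assumes X: "X \<in> carrier_mat (n * d) (n * d)" and a: "a < d"
  defines "u \<equiv> vec (n * d) (\<lambda>r. if r mod d = a then w (r div d) else 0)"
  shows "(X *\<^sub>v u) \<bullet>c u = (\<Sum>i<n. \<Sum>j<n. X $$ (i * d + a, j * d + a) * w j * cnj (w i))"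
proof -
  have u: "u \<in> carrier_vec (n * d)" unfolding u_def by simp
  have "(X *\<^sub>v u) \<bullet>c u = (\<Sum>i<n. \<Sum>b<d. \<Sum>j<n. \<Sum>b'<d.
      X $$ (i*d+b, j*d+b') * (if b' = a then w j else 0) * cnj (if b = a then w i else 0))"
    unfolding quadratic_form_blocks[OF X u]
    by (intro sum.cong refl) (simp add: u_def block_index_less)
  also have "\<dots> = (\<Sum>i<n. \<Sum>b<d. if b = a then (\<Sum>j<n. X $$ (i*d+a, j*d+a) * w j * cnj (w i)) else 0)"
  proof (intro sum.cong[OF refl])
    fix i b
    have "(\<Sum>j<n. \<Sum>b'<d. X $$ (i*d+b, j*d+b') * (if b' = a then w j else 0) * cnj (if b = a then w i else 0))
      = (\<Sum>j<n. X $$ (i*d+b, j*d+a) * w j * cnj (if b = a then w i else 0))"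
      using sum_mult_delta[OF a, of "\<lambda>b'. X $$ (i*d+b, _*d+b') * cnj (if b = a then w i else 0)"]
      by (intro sum.cong refl) (simp add: mult_ac)
    then show "(\<Sum>j<n. \<Sum>b'<d. X $$ (i*d+b, j*d+b') * (if b' = a then w j else 0) * cnj (if b = a then w i else 0))
      = (if b = a then (\<Sum>j<n. X $$ (i*d+a, j*d+a) * w j * cnj (w i)) else 0)"
      by simp
  qed
  also have "\<dots> = (\<Sum>i<n. \<Sum>j<n. X $$ (i*d+a, j*d+a) * w j * cnj (w i))"
    using a by simp
  finally show ?thesis .
qed

lemma replacement_channel_cp:
  fixes e :: "complex vec"
  assumes e: "e \<in> carrier_vec d" and X: "X \<in> carrier_mat (n * d) (n * d)" and pX: "psd X"
  shows "psd (ampl n d (\<lambda>\<rho>. mtrace \<rho> \<cdot>\<^sub>m ketbra e) X)"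
proof -
  define Y where "Y = ampl n d (\<lambda>\<rho>. mtrace \<rho> \<cdot>\<^sub>m ketbra e) X"
  define T where "T i j = (\<Sum>a<d. X $$ (i*d+a, j*d+a))" for i j
  have Y: "Y \<in> carrier_mat (n * d) (n * d)" unfolding Y_def ampl_def by simp
  have Yij: "Y $$ (i*d+b, j*d+b') = T i j * (e $ b * cnj (e $ b'))"
    if "i < n" "b < d" "j < n" "b' < d" for i j b b'
    unfolding Y_def ampl_def using that e block_index_less[of i n b d] block_index_less[of j n b' d]
    by (simp add: mtrace_def T_def ketbra_def)
  show ?thesis unfolding Y_def[symmetric]
  proof (rule psdI[OF Y])
    fix v :: "complex vec" assume v: "v \<in> carrier_vec (n * d)"
    \<comment> \<open>The quadratic form of \<open>Y\<close> at \<open>v\<close> is a sum of quadratic forms of \<open>X\<close>, one for each slice.\<close>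
    define w where "w i = (\<Sum>b<d. cnj (e $ b) * v $ (i*d+b))" for i
    define u where "u a = vec (n * d) (\<lambda>r. if r mod d = a then w (r div d) else 0)" for a
    have "(Y *\<^sub>v v) \<bullet>c v = (\<Sum>i<n. \<Sum>b<d. \<Sum>j<n. \<Sum>b'<d.
        T i j * (e $ b * cnj (e $ b')) * v $ (j*d+b') * cnj (v $ (i*d+b)))"
      unfolding quadratic_form_blocks[OF Y v] by (intro sum.cong refl) (simp add: Yij)
    also have "\<dots> = (\<Sum>i<n. \<Sum>j<n. T i j * w j * cnj (w i))"
    proof (rule sum.cong[OF refl])
      fix i
      show "(\<Sum>b<d. \<Sum>j<n. \<Sum>b'<d. T i j * (e $ b * cnj (e $ b')) * v $ (j*d+b') * cnj (v $ (i*d+b)))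
        = (\<Sum>j<n. T i j * w j * cnj (w i))"
        unfolding w_def cnj_sum sum_distrib_left sum_distrib_right
        by (subst sum.swap) (intro sum.cong refl; simp add: mult_ac)
    qed
    also have "\<dots> = (\<Sum>a<d. \<Sum>i<n. \<Sum>j<n. X $$ (i*d+a, j*d+a) * w j * cnj (w i))"
      unfolding T_def sum_distrib_right by (subst sum.swap) (simp add: sum.swap[of _ "{..<n}" "{..<d}"])
    also have "\<dots> = (\<Sum>a<d. (X *\<^sub>v u a) \<bullet>c u a)"
      unfolding u_def by (intro sum.cong refl) (simp add: quadratic_form_slice[OF X])
    finally have "(Y *\<^sub>v v) \<bullet>c v = (\<Sum>a<d. (X *\<^sub>v u a) \<bullet>c u a)" .
    moreover have "Im ((X *\<^sub>v u a) \<bullet>c u a) = 0 \<and> 0 \<le> Re ((X *\<^sub>v u a) \<bullet>c u a)" for a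
      using psdD[OF pX X] unfolding u_def by simp
    ultimately show "Im ((Y *\<^sub>v v) \<bullet>c v) = 0 \<and> 0 \<le> Re ((Y *\<^sub>v v) \<bullet>c v)"
      by (simp add: Im_sum Re_sum sum_nonneg)
  qed
qed

lemma replacement_channel:
  assumes e: "e \<in> carrier_vec d" and ee: "e \<bullet>c e = 1"
  shows "channel d (\<lambda>\<rho>. mtrace \<rho> \<cdot>\<^sub>m ketbra e)"
  unfolding channel_def
proof (intro conjI)
  have K: "ketbra e \<in> carrier_mat d d" using e by simp
  show "linear_map_on d (\<lambda>\<rho>. mtrace \<rho> \<cdot>\<^sub>m ketbra e)"
    unfolding linear_map_on_def
  proof (intro conjI ballI allI)
    fix A B :: "complex mat" assume A: "A \<in> carrier_mat d d" and B: "B \<in> carrier_mat d d"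
    show "mtrace (A + B) \<cdot>\<^sub>m ketbra e = mtrace A \<cdot>\<^sub>m ketbra e + mtrace B \<cdot>\<^sub>m ketbra e"
      unfolding mtrace_add[OF A B] using K by (intro eq_matI) (auto simp: algebra_simps)
  next
    fix c :: complex and A :: "complex mat" assume A: "A \<in> carrier_mat d d"
    show "mtrace (c \<cdot>\<^sub>m A) \<cdot>\<^sub>m ketbra e = c \<cdot>\<^sub>m (mtrace A \<cdot>\<^sub>m ketbra e)"
      unfolding mtrace_smult[OF A] using K by (intro eq_matI) auto
  qed (use K in simp)
  show "completely_positive d (\<lambda>\<rho>. mtrace \<rho> \<cdot>\<^sub>m ketbra e)"
    unfolding completely_positive_def using replacement_channel_cp[OF e] by blast
  show "trace_preserving d (\<lambda>\<rho>. mtrace \<rho> \<cdot>\<^sub>m ketbra e)"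
    unfolding trace_preserving_def using mtrace_smult[OF K] ketbra_trace[OF e] ee by simp
qed

lemma vkernel_replacement:
  assumes e: "e \<in> carrier_vec d" and ee: "e \<bullet>c e = 1"
  shows "vkernel d (\<lambda>\<rho>. mtrace \<rho> \<cdot>\<^sub>m ketbra e) = {\<psi> \<in> carrier_vec d. \<psi> \<bullet>c e = 0}"
proof -
  have K: "ketbra e \<in> carrier_mat d d" using e by simp
  have mv: "(t \<cdot>\<^sub>m ketbra e) *\<^sub>v \<psi> = (t * (\<psi> \<bullet>c e)) \<cdot>\<^sub>v e" if \<psi>: "\<psi> \<in> carrier_vec d" for t \<psi>
    unfolding smult_mat_mult_vec[OF K \<psi>] ketbra_mult_vec[OF e \<psi>] by (simp add: smult_smult_assoc)
  have "c \<cdot>\<^sub>v e = 0\<^sub>v d \<longleftrightarrow> c = 0" for c :: complex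
  proof
    assume "c \<cdot>\<^sub>v e = 0\<^sub>v d"
    then have "(c \<cdot>\<^sub>v e) \<bullet>c e = 0" using e by (simp add: cscalar_prod_zero_left[of _ d])
    then show "c = 0" using e ee by (simp add: cscalar_prod_smult_left[of _ d])
  qed (use e in auto)
  moreover have "density d (ketbra e)" by (rule ketbra_density[OF e ee])
  ultimately show ?thesis
    unfolding vkernel_def using mv densityD(3) by fastforce
qed

lemma subspace_dim_mat_kernel: "subspace_dim d (mat_kernel (A :: complex mat)) = kernel.dim d A"
  unfolding subspace_dim_def by simp

lemma subspace_dim_zero: "subspace_dim d {0\<^sub>v d} = 0"
proof -
  have "mat_kernel (1\<^sub>m d :: complex mat) = {0\<^sub>v d}"
    unfolding mat_kernel_def by auto
  then show ?thesis
    using kernel_one_mat(1)[where n = d and 'a = complex] subspace_dim_mat_kernel[of d "1\<^sub>m d"] by simp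
qed

lemma kernel_dim_single_row:
  fixes R :: "complex mat"
  assumes R: "R \<in> carrier_mat 1 d" and j0: "j0 < d" "R $$ (0, j0) = 1"
    and before: "\<And>j. j < j0 \<Longrightarrow> R $$ (0, j) = 0"
  shows "kernel.dim d R = d - 1"
proof -
  have "pivot_fun R (\<lambda>_. j0) d"
  proof (rule pivot_funI[of _ 1])
    show "dim_row R = 1" using R by simp
  qed (use j0 before in simp_all)
  then have ref: "row_echelon_form R" unfolding row_echelon_form_def using R by auto
  have "row R 0 \<noteq> 0\<^sub>v d"
  proof
    assume "row R 0 = 0\<^sub>v d"
    then have "row R 0 $ j0 = 0" using j0 by simp
    then show False using j0 R by simp
  qed
  then have "{i. i < 1 \<and> row R i \<noteq> 0\<^sub>v d} = {0}" by auto
  then show ?thesis using find_base_vectors(6)[OF ref R] by simp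
qed

lemma subspace_dim_orthogonal_complement:
  assumes e: "e \<in> carrier_vec d" and ee: "e \<bullet>c e = 1"
  shows "subspace_dim d {\<psi> \<in> carrier_vec d. \<psi> \<bullet>c e = 0} = d - 1"
proof -
  have "e \<noteq> 0\<^sub>v d" using ee e by (auto simp: cscalar_prod_zero_left[of _ d])
  then obtain k where k: "k < d" "e $ k \<noteq> 0" using e by (auto simp: vec_eq_iff)
  define j0 where "j0 = (LEAST k. e $ k \<noteq> 0)"
  have j0: "e $ j0 \<noteq> 0" "j0 \<le> k"
    unfolding j0_def by (rule LeastI[of _ k], rule k(2)) (rule Least_le, rule k(2))
  have before: "e $ j = 0" if "j < j0" for j
    using not_less_Least[of j "\<lambda>k. e $ k \<noteq> 0"] that j0_def by auto
  \<comment> \<open>The orthogonal complement of \<open>e\<close> is the kernel of the row \<open>e\<^sup>*\<close>, normalized at its first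
    nonzero entry.\<close>
  define R where "R = mat 1 d (\<lambda>(_, k). cnj (e $ k) / cnj (e $ j0))"
  have R: "R \<in> carrier_mat 1 d" unfolding R_def by simp
  have "kernel.dim d R = d - 1"
    using kernel_dim_single_row[OF R, of j0] j0 k before by (simp add: R_def)
  moreover have "R *\<^sub>v \<psi> = 0\<^sub>v 1 \<longleftrightarrow> \<psi> \<bullet>c e = 0" if \<psi>: "\<psi> \<in> carrier_vec d" for \<psi>
  proof -
    have "(R *\<^sub>v \<psi>) $ 0 = (\<Sum>k<d. \<psi> $ k * cnj (e $ k)) / cnj (e $ j0)"
      unfolding mult_mat_vec_index_sum[OF R \<psi>, of 0, simplified] sum_divide_distrib
      by (rule sum.cong) (auto simp: R_def)
    also have "\<dots> = (\<psi> \<bullet>c e) / cnj (e $ j0)" using cscalar_prod_eq_sum[OF \<psi> e] by simp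
    finally have "(R *\<^sub>v \<psi>) $ 0 = (\<psi> \<bullet>c e) / cnj (e $ j0)" .
    moreover have "R *\<^sub>v \<psi> = 0\<^sub>v 1 \<longleftrightarrow> (R *\<^sub>v \<psi>) $ 0 = 0"
      using R by (auto simp: vec_eq_iff)
    ultimately show ?thesis using j0 by simp
  qed
  then have "mat_kernel R = {\<psi> \<in> carrier_vec d. \<psi> \<bullet>c e = 0}"
    unfolding mat_kernel_def using R by auto
  ultimately show ?thesis using subspace_dim_mat_kernel[of d R] by simp
qed

lemma replacement_channel_admissible:
  assumes e: "e \<in> carrier_vec d" "e \<bullet>c e = 1" and big: "1 - \<epsilon> \<le> \<eta>\<^sup>2"
    and \<eta>: "0 \<le> \<eta>" "\<eta> \<le> 1"
  shows "admissible d \<eta> \<epsilon> (\<lambda>\<rho>. mtrace \<rho> \<cdot>\<^sub>m ketbra e)"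
  unfolding admissible_def
proof (intro conjI allI impI)
  show "channel d (\<lambda>\<rho>. mtrace \<rho> \<cdot>\<^sub>m ketbra e)" by (rule replacement_channel[OF e])
  fix \<rho> assume \<rho>: "density d \<rho>"
  have "mtrace \<rho> \<cdot>\<^sub>m ketbra e = ketbra e"
    using densityD(3)[OF \<rho>] by (intro eq_matI) auto
  then show "1 - \<epsilon> \<le> fidelity (erasure d \<eta> \<rho>) (erasure d \<eta> (mtrace \<rho> \<cdot>\<^sub>m ketbra e))"
    using fidelity_erasure_lower[OF \<rho> ketbra_density[OF e] \<eta>] big by simp
qed

lemma zero_in_vkernel:
  assumes ch: "channel d \<Lambda>"
  shows "0\<^sub>v d \<in> vkernel d \<Lambda>"
proof -
  have "\<Lambda> \<rho> *\<^sub>v 0\<^sub>v d = 0\<^sub>v d" if "density d \<rho>" for \<rho>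
    using densityD(1)[OF channel_density[OF ch that]] by (intro eq_vecI) (auto simp: scalar_prod_def)
  then show ?thesis unfolding vkernel_def by simp
qed

lemma admissible_vkernel_zero:
  assumes adm: "admissible d \<eta> \<epsilon> \<Lambda>" and small: "\<eta>\<^sup>2 < 1 - \<epsilon>" and \<eta>: "0 \<le> \<eta>" "\<eta> \<le> 1"
    and "\<psi> \<in> vkernel d \<Lambda>"
  shows "\<psi> = 0\<^sub>v d"
proof (rule ccontr)
  assume "\<psi> \<noteq> 0\<^sub>v d"
  have ch: "channel d \<Lambda>"
    and fid: "\<And>\<rho>. density d \<rho> \<Longrightarrow> 1 - \<epsilon> \<le> fidelity (erasure d \<eta> \<rho>) (erasure d \<eta> (\<Lambda> \<rho>))"
    using adm unfolding admissible_def by auto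
  from \<open>\<psi> \<in> vkernel d \<Lambda>\<close> have \<psi>: "\<psi> \<in> carrier_vec d"
    and ker: "\<And>\<rho>. density d \<rho> \<Longrightarrow> \<Lambda> \<rho> *\<^sub>v \<psi> = 0\<^sub>v d"
    unfolding vkernel_def by auto
  define \<phi> where "\<phi> = normalize_vec \<psi>"
  have \<phi>: "\<phi> \<in> carrier_vec d" "\<phi> \<bullet>c \<phi> = 1"
    using \<psi> normalize_vec_norm[OF \<psi> \<open>\<psi> \<noteq> 0\<^sub>v d\<close>] unfolding \<phi>_def by auto
  note \<rho> = ketbra_density[OF \<phi>]
  have \<sigma>: "density d (\<Lambda> (ketbra \<phi>))" by (rule channel_density[OF ch \<rho>])
  have "\<Lambda> (ketbra \<phi>) *\<^sub>v (complex_of_real (1 / sqrt (Re (\<psi> \<bullet>c \<psi>))) \<cdot>\<^sub>v \<psi>) = 0\<^sub>v d"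
    unfolding mult_mat_vec[OF densityD(1)[OF \<sigma>] \<psi>] ker[OF \<rho>] by (intro eq_vecI) simp_all
  then have "\<Lambda> (ketbra \<phi>) *\<^sub>v \<phi> = 0\<^sub>v d" unfolding \<phi>_def normalize_vec_def by simp
  from fidelity_erasure_orthogonal[OF \<phi> \<sigma> this \<eta>] fid[OF \<rho>] small show False by simp
qed

theorem mainTheorem1:
  fixes d :: nat and \<eta> \<epsilon> :: real
  assumes "d \<ge> 2" and "0 \<le> \<eta>" and "\<eta> \<le> 1" and "0 \<le> \<epsilon>" and "\<epsilon> \<le> 1"
  shows "(\<eta>\<^sup>2 \<ge> 1 - \<epsilon> \<longrightarrow>
           (\<forall>e1. e1 \<in> carrier_vec d \<and> e1 \<bullet>c e1 = 1 \<longrightarrow>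
              (let \<Lambda> = (\<lambda>\<rho>. mtrace \<rho> \<cdot>\<^sub>m ketbra e1) in
                 admissible d \<eta> \<epsilon> \<Lambda> \<and>
                 subspace_dim d (vkernel d \<Lambda>) = d - 1 \<and>
                 compressibility d \<Lambda> = 1)))
       \<and> (\<eta>\<^sup>2 < 1 - \<epsilon> \<longrightarrow>
           (\<forall>\<Lambda>. admissible d \<eta> \<epsilon> \<Lambda> \<longrightarrow>
              vkernel d \<Lambda> = {0\<^sub>v d} \<and> compressibility d \<Lambda> = 0))"
proof (intro conjI impI allI)
  fix e1 :: "complex vec"
  assume big: "\<eta>\<^sup>2 \<ge> 1 - \<epsilon>" and "e1 \<in> carrier_vec d \<and> e1 \<bullet>c e1 = 1"
  then have e1: "e1 \<in> carrier_vec d" "e1 \<bullet>c e1 = 1" by auto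
  have dim: "subspace_dim d (vkernel d (\<lambda>\<rho>. mtrace \<rho> \<cdot>\<^sub>m ketbra e1)) = d - 1"
    unfolding vkernel_replacement[OF e1] by (rule subspace_dim_orthogonal_complement[OF e1])
  moreover have "compressibility d (\<lambda>\<rho>. mtrace \<rho> \<cdot>\<^sub>m ketbra e1) = 1"
    unfolding compressibility_def dim using assms(1) by simp
  ultimately show "let \<Lambda> = (\<lambda>\<rho>. mtrace \<rho> \<cdot>\<^sub>m ketbra e1) in
      admissible d \<eta> \<epsilon> \<Lambda> \<and> subspace_dim d (vkernel d \<Lambda>) = d - 1 \<and> compressibility d \<Lambda> = 1"
    using replacement_channel_admissible[OF e1 big assms(2,3)] by simp
next
  fix \<Lambda> assume "\<eta>\<^sup>2 < 1 - \<epsilon>" and "admissible d \<eta> \<epsilon> \<Lambda>"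
  then show ker: "vkernel d \<Lambda> = {0\<^sub>v d}"
    using admissible_vkernel_zero[OF _ _ assms(2,3)] zero_in_vkernel[of d \<Lambda>]
    unfolding admissible_def by blast
  show "compressibility d \<Lambda> = 0" unfolding compressibility_def ker subspace_dim_zero by simp
qed

end
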